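(* Let $d,n\ge1$, $\sigma>0$, $\psi\ge 1$, let $\mathbf M$ and $\mathbf S$ be symmetric positive definite $d\times d$ matrices, $\mathbf T$ symmetric positive semi-definite, and $W=\{\mathbf w:\mathbf w^\top\mathbf M\mathbf w\le1\}$. For $\mathbf A\in\mathbb R^{d\times d}$ define the estimator $\hat{\mathbf w}_{\mathbf A}=\frac1n\mathbf M^{-1/2}\mathbf A\mathbf M^{1/2}\mathbf S^{-1}\sum_{i=1}^n\mathbf x_iy_i$ and $$J(\mathbf A)=\big\|(\mathbf I-\mathbf A)^\top\mathbf T'(\mathbf I-\mathbf A)\big\|+\frac{2\sigma^2+2\psi\|\mathbf S'\|}{n}\big\langle\mathbf T',\mathbf A(\mathbf S')^{-1}\mathbf A^\top\big\rangle .$$ Then for every $\mathbf A$, $\sup_{(P,Q)\in\mathcal P_\psi(W,\mathbf S,\mathbf T)}\mathbb E\|\hat{\mathbf w}_{\mathbf A}-\mathbf w^*\|_{\mathbf T}^2\le J(\mathbf A)$, where the expectation is over $n$ i.i.d. samples $(\mathbf x_i,y_i)\sim P$. In particular, for $\hat{\mathbf w}^{\mathrm{opt}}=\hat{\mathbf w}_{\mathbf A^\star}$ with $\mathbf A^\star\in\arg\min_{\mathbf A}J(\mathbf A)$, $$\sup_{(P,Q)\in\mathcal P_\psi(W,\mathbf S,\mathbf T)}\mathbb E\|\hat{\mathbf w}^{\mathrm{opt}}-\mathbf w^*\|_{\mathbf T}^2\le\min_{\mathbf A\in\mathbb R^{d\times d}}J(\mathbf A).$$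
   Context: Notation: $\|\mathbf w\|_{\mathbf A}^2=\mathbf w^\top\mathbf A\mathbf w$; $\|\cdot\|$ is the spectral norm; $\langle\mathbf A,\mathbf B\rangle=\operatorname{tr}(\mathbf A^\top\mathbf B)$; $\mathbf S'=\mathbf M^{-1/2}\mathbf S\mathbf M^{-1/2}$, $\mathbf T'=\mathbf M^{-1/2}\mathbf T\mathbf M^{-1/2}$. Class $\mathcal P_\psi(W,\mathbf S,\mathbf T)$: all pairs $(P,Q)$ of probability distributions of $(\mathbf x,y)\in\mathbb R^d\times\mathbb R$ with finite fourth moments such that (i) $\mathbb E_P[\mathbf x\mathbf x^\top]=\mathbf S$, $\mathbb E_Q[\mathbf x\mathbf x^\top]=\mathbf T$; (ii) the source risk $\frac12\mathbb E_P(y-\langle\mathbf w,\mathbf x\rangle)^2$ and target risk $\frac12\mathbb E_Q(y-\langle\mathbf w,\mathbf x\rangle)^2$ admit a common minimizer $\mathbf w^*\in W$; (iii) with $\epsilon=y-\mathbf x^\top\mathbf w^*$, $\mathbb E_P[\epsilon^2\mathbf x\mathbf x^\top]\preceq\sigma^2\mathbf S$; (iv) (fourth moment) for every positive semi-definite $\mathbf A$, $\mathbb E_P[\mathbf x\mathbf x^\top\mathbf A\mathbf x\mathbf x^\top]\preceq\psi\operatorname{tr}(\mathbf S\mathbf A)\mathbf S$. *)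

theory Defs
  imports "HOL-Analysis.Analysis" "HOL-Probability.Probability"
begin

definition outer :: "real^'d \<Rightarrow> real^'d \<Rightarrow> real^'d^'d" where
  "outer u v = (\<chi> i j. u $ i * v $ j)"

definition psd_mat :: "real^'d^'d \<Rightarrow> bool" where
  "psd_mat A \<longleftrightarrow> transpose A = A \<and> (\<forall>x. 0 \<le> x \<bullet> (A *v x))"

definition pd_mat :: "real^'d^'d \<Rightarrow> bool" where
  "pd_mat A \<longleftrightarrow> transpose A = A \<and> (\<forall>x. x \<noteq> 0 \<longrightarrow> 0 < x \<bullet> (A *v x))"

text \<open>Loewner order A \<preceq> B, i.e. B - A positive semi-definite (used on symmetric matrices).\<close>
definition loewner_le :: "real^'d^'d \<Rightarrow> real^'d^'d \<Rightarrow> bool" where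
  "loewner_le A B \<longleftrightarrow> (\<forall>x. x \<bullet> (A *v x) \<le> x \<bullet> (B *v x))"

definition msqrt :: "real^'d^'d \<Rightarrow> real^'d^'d" where
  "msqrt A = (THE R. psd_mat R \<and> R ** R = A)"

definition spec_norm :: "real^'d^'d \<Rightarrow> real" where
  "spec_norm A = onorm (\<lambda>v. A *v v)"

definition qform :: "real^'d^'d \<Rightarrow> real^'d \<Rightarrow> real" where
  "qform A w = w \<bullet> (A *v w)"

definition frob_inner :: "real^'d^'d \<Rightarrow> real^'d^'d \<Rightarrow> real" where
  "frob_inner A B = trace (transpose A ** B)"

definition ballW :: "real^'d^'d \<Rightarrow> (real^'d) set" where
  "ballW M = {w. w \<bullet> (M *v w) \<le> 1}"

definition risk :: "((real^'d) \<times> real) measure \<Rightarrow> real^'d \<Rightarrow> real" where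
  "risk P w = (1/2) * (\<integral>z. (snd z - fst z \<bullet> w)\<^sup>2 \<partial>P)"

definition is_distr :: "((real^'d) \<times> real) measure \<Rightarrow> bool" where
  "is_distr P \<longleftrightarrow> prob_space P \<and> sets P = sets borel \<and> integrable P (\<lambda>z. (norm z) ^ 4)"

definition in_class ::
  "real \<Rightarrow> real \<Rightarrow> real^'d^'d \<Rightarrow> real^'d^'d \<Rightarrow> real^'d^'d
   \<Rightarrow> ((real^'d) \<times> real) measure \<Rightarrow> ((real^'d) \<times> real) measure \<Rightarrow> real^'d \<Rightarrow> bool" where
  "in_class \<sigma> \<psi> M S T P Q wstar \<longleftrightarrow>
     is_distr P \<and> is_distr Q \<and>
     (\<integral>z. outer (fst z) (fst z) \<partial>P) = S \<and>
     (\<integral>z. outer (fst z) (fst z) \<partial>Q) = T \<and>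
     wstar \<in> ballW M \<and>
     (\<forall>w. risk P wstar \<le> risk P w) \<and> (\<forall>w. risk Q wstar \<le> risk Q w) \<and>
     loewner_le (\<integral>z. (snd z - fst z \<bullet> wstar)\<^sup>2 *\<^sub>R outer (fst z) (fst z) \<partial>P) (\<sigma>\<^sup>2 *\<^sub>R S) \<and>
     (\<forall>A. psd_mat A \<longrightarrow>
        loewner_le (\<integral>z. outer (fst z) (fst z) ** A ** outer (fst z) (fst z) \<partial>P)
                   ((\<psi> * trace (S ** A)) *\<^sub>R S))"

definition west :: "nat \<Rightarrow> real^'d^'d \<Rightarrow> real^'d^'d \<Rightarrow> real^'d^'d
     \<Rightarrow> (nat \<Rightarrow> (real^'d) \<times> real) \<Rightarrow> real^'d" where
  "west n M S A \<omega> = (1 / real n) *\<^sub>R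
     ((matrix_inv (msqrt M) ** A ** msqrt M ** matrix_inv S) *v (\<Sum>i<n. snd (\<omega> i) *\<^sub>R fst (\<omega> i)))"

definition Jfun :: "nat \<Rightarrow> real \<Rightarrow> real \<Rightarrow> real^'d^'d \<Rightarrow> real^'d^'d \<Rightarrow> real^'d^'d
     \<Rightarrow> real^'d^'d \<Rightarrow> real" where
  "Jfun n \<sigma> \<psi> M S T A =
     (let Mi = matrix_inv (msqrt M);
          S' = Mi ** S ** Mi;
          T' = Mi ** T ** Mi;
          IA = mat 1 - A
      in spec_norm (transpose IA ** T' ** IA)
         + (2 * \<sigma>\<^sup>2 + 2 * \<psi> * spec_norm S') / real n
           * frob_inner T' (A ** matrix_inv S' ** transpose A))"

end

theory Submission
  imports Defs
begin

text \<open>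
  Write \<open>\<hat>w\<^sub>A - w\<^sup>*\<close> as the sample mean of the i.i.d. vectors \<open>y\<^sub>i C x\<^sub>i - w\<^sup>*\<close>, where
  \<open>C = M\<^sup>-\<^sup>1\<^sup>/\<^sup>2 A M\<^sup>1\<^sup>/\<^sup>2 S\<^sup>-\<^sup>1\<close>. Its expected \<open>T\<close>-norm is the squared bias plus \<open>1/n\<close> times the
  variance of one summand. Optimality of \<open>w\<^sup>*\<close> for the source risk gives the normal equation
  \<open>E[y x] = S w\<^sup>*\<close>, so the bias is \<open>-M\<^sup>-\<^sup>1\<^sup>/\<^sup>2 (I - A) M\<^sup>1\<^sup>/\<^sup>2 w\<^sup>*\<close>; since \<open>|M\<^sup>1\<^sup>/\<^sup>2 w\<^sup>*| \<le> 1\<close>, its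
  \<open>T\<close>-norm is at most \<open>\<parallel>(I - A)\<^sup>T T' (I - A)\<parallel>\<close>. For the variance, \<open>y\<^sup>2 \<le> 2\<epsilon>\<^sup>2 + 2\<langle>x, w\<^sup>*\<rangle>\<^sup>2\<close>;
  diagonalising \<open>K = C\<^sup>T T C\<close> reduces \<open>E[y\<^sup>2 x\<^sup>T K x]\<close> to rank-one test matrices, where the noise
  condition and the fourth-moment condition (with \<open>A = w\<^sup>* w\<^sup>*\<^sup>T\<close>) give the bound
  \<open>(2\<sigma>\<^sup>2 + 2\<psi> w\<^sup>*\<^sup>T S w\<^sup>*) tr(S K)\<close>. Finally \<open>w\<^sup>*\<^sup>T S w\<^sup>* \<le> \<parallel>S'\<parallel>\<close> and
  \<open>tr(S K) = \<langle>T', A S'\<^sup>-\<^sup>1 A\<^sup>T\<rangle>\<close>.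
\<close>

section \<open>Symmetric and positive semi-definite matrices\<close>

lemma inner_matrix_vector_transpose: "x \<bullet> (A *v y) = (transpose A *v x) \<bullet> (y::real^'n)"
  by (metis dot_lmul_matrix vector_transpose_matrix transpose_transpose)

lemma inner_symmetric_matrix_commute:
  "transpose K = K \<Longrightarrow> x \<bullet> (K *v y) = y \<bullet> (K *v (x::real^'n))"
  by (metis inner_matrix_vector_transpose inner_commute)

lemma linear_coeff_zero_if_quadratic_nonneg:
  fixes b c :: real
  assumes "\<And>t. 0 \<le> 2*t*b + t^2*c"
  shows "b = 0"
proof (rule ccontr)
  assume b: "b \<noteq> 0"
  define d where "d = \<bar>c\<bar> + 1"
  have pos: "d > 0" unfolding d_def by simp
  define t where "t = - b / d"
  have td: "t * d = - b" unfolding t_def using pos by simp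
  have "t^2*c \<le> t^2*\<bar>c\<bar>" by (simp add: mult_left_mono)
  moreover have "d^2 * (2*t*b + t^2*\<bar>c\<bar>) = b^2 * (\<bar>c\<bar> - 2*d)"
  proof -
    have "d^2 * (2*t*b + t^2*\<bar>c\<bar>) = 2*d*b*(t*d) + (t*d)^2*\<bar>c\<bar>"
      by (simp add: algebra_simps power2_eq_square)
    also have "\<dots> = b^2 * (\<bar>c\<bar> - 2*d)" unfolding td by (simp add: algebra_simps power2_eq_square)
    finally show ?thesis .
  qed
  moreover have "b^2 * (\<bar>c\<bar> - 2*d) < 0"
    using b pos unfolding d_def by (intro mult_pos_neg) auto
  ultimately have "d^2 * (2*t*b + t^2*\<bar>c\<bar>) < 0" by linarith
  hence "2*t*b + t^2*\<bar>c\<bar> < 0" using pos by (simp add: mult_less_0_iff)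
  hence "2*t*b + t^2*c < 0" using \<open>t^2*c \<le> t^2*\<bar>c\<bar>\<close> by linarith
  with assms[of t] show False by linarith
qed

definition orthonormal_eigenvectors :: "real^'n^'n \<Rightarrow> (real^'n) set \<Rightarrow> bool" where
  "orthonormal_eigenvectors K B \<longleftrightarrow> finite B
     \<and> (\<forall>v\<in>B. norm v = 1 \<and> K *v v = (v \<bullet> (K *v v)) *\<^sub>R v)
     \<and> (\<forall>v\<in>B. \<forall>w\<in>B. v \<noteq> w \<longrightarrow> v \<bullet> w = 0)"

text \<open>Perturbing the maximiser \<open>v\<close> by \<open>t w\<close> with \<open>w \<bottom> v\<close> shows that \<open>K v\<close> has no component
  orthogonal to \<open>v\<close>.\<close>
lemma eigenvector_if_max_on_invariant_subspace:
  fixes K :: "real^'n^'n"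
  assumes sym: "transpose K = K" and V: "subspace V" and inv: "\<And>x. x \<in> V \<Longrightarrow> K *v x \<in> V"
    and vV: "v \<in> V" and nv: "norm v = 1"
    and vmax: "\<And>y. y \<in> V \<Longrightarrow> norm y = 1 \<Longrightarrow> y \<bullet> (K *v y) \<le> v \<bullet> (K *v v)"
  shows "K *v v = (v \<bullet> (K *v v)) *\<^sub>R v"
proof -
  define l where "l = v \<bullet> (K *v v)"
  have vv: "v \<bullet> v = 1" using nv by (simp add: norm_eq_1)
  have perp: "w \<bullet> (K *v v) = 0" if wV: "w \<in> V" and wv: "w \<bullet> v = 0" for w
  proof -
    have "0 \<le> 2*t*(- (w \<bullet> (K *v v))) + t^2*(l * (w \<bullet> w) - w \<bullet> (K *v w))" for t
    proof -
      define x where "x = v + t *\<^sub>R w"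
      have xV: "x \<in> V" unfolding x_def using vV wV V by (simp add: subspace_add subspace_scale)
      have nx2: "x \<bullet> x = 1 + t^2 * (w \<bullet> w)"
        unfolding x_def using vv wv
        by (simp add: inner_add_left inner_add_right inner_commute power2_eq_square)
      have "x \<bullet> x > 0" using nx2 by (simp add: add_pos_nonneg)
      hence nx: "norm x > 0" by (cases "x = 0") auto
      have "x /\<^sub>R norm x \<in> V" using xV V by (simp add: subspace_scale)
      moreover have "norm (x /\<^sub>R norm x) = 1" using nx by simp
      ultimately have "(x /\<^sub>R norm x) \<bullet> (K *v (x /\<^sub>R norm x)) \<le> l" using vmax l_def by blast
      moreover have "(x /\<^sub>R norm x) \<bullet> (K *v (x /\<^sub>R norm x)) = (x \<bullet> (K *v x)) / (norm x)^2"
        using nx by (simp add: matrix_vector_mult_scaleR power2_eq_square field_simps)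
      ultimately have "(x \<bullet> (K *v x)) / (norm x)^2 \<le> l" by simp
      hence "x \<bullet> (K *v x) \<le> l * (x \<bullet> x)"
        using nx by (simp add: divide_le_eq power2_norm_eq_inner mult.commute)
      moreover have "x \<bullet> (K *v x) = l + 2*t*(w \<bullet> (K *v v)) + t^2 * (w \<bullet> (K *v w))"
        unfolding x_def l_def using inner_symmetric_matrix_commute[OF sym, of v w]
        by (simp add: matrix_vector_right_distrib matrix_vector_mult_scaleR inner_add_left
            inner_add_right power2_eq_square algebra_simps)
      ultimately show ?thesis using nx2 by (simp add: algebra_simps)
    qed
    from linear_coeff_zero_if_quadratic_nonneg[OF this] show ?thesis by simp
  qed
  define r where "r = K *v v - l *\<^sub>R v"
  have rV: "r \<in> V" unfolding r_def using inv[OF vV] vV V by (simp add: subspace_diff subspace_scale)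
  have rv: "r \<bullet> v = 0"
    unfolding r_def l_def using vv by (simp add: inner_diff_left inner_diff_right inner_commute)
  have "r \<bullet> r = r \<bullet> (K *v v) - l * (r \<bullet> v)" unfolding r_def by (simp add: inner_diff_right)
  hence "r \<bullet> r = 0" using perp[OF rV rv] rv by simp
  thus ?thesis unfolding r_def l_def by simp
qed

lemma orthonormal_eigenvectors_extend:
  fixes K :: "real^'n^'n"
  assumes sym: "transpose K = K" and E: "orthonormal_eigenvectors K B" and c: "card B < CARD('n)"
  shows "\<exists>v. v \<notin> B \<and> orthonormal_eigenvectors K (insert v B)"
proof -
  have fin: "finite B" using E by (simp add: orthonormal_eigenvectors_def)
  define V where "V = {x::real^'n. \<forall>b\<in>B. orthogonal b x}"
  have V: "subspace V" unfolding V_def by (rule subspace_orthogonal_to_vectors)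
  have inv: "K *v x \<in> V" if "x \<in> V" for x
  proof -
    have "b \<bullet> (K *v x) = 0" if "b \<in> B" for b
    proof -
      have "b \<bullet> (K *v x) = x \<bullet> (K *v b)" by (rule inner_symmetric_matrix_commute[OF sym])
      also have "\<dots> = (b \<bullet> (K *v b)) * (x \<bullet> b)"
        using E that by (metis orthonormal_eigenvectors_def inner_scaleR_right)
      also have "x \<bullet> b = 0" using \<open>x \<in> V\<close> that by (simp add: V_def orthogonal_def inner_commute)
      finally show ?thesis by simp
    qed
    thus ?thesis by (simp add: V_def orthogonal_def)
  qed
  have indep: "independent B"
    using E by (intro pairwise_orthogonal_independent)
      (auto simp: orthonormal_eigenvectors_def pairwise_def orthogonal_def)
  have "dim (span B) = card B" using indep by (rule dim_span_eq_card_independent)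
  hence "span B \<noteq> UNIV" using c by (metis DIM_cart DIM_real dim_UNIV mult.right_neutral less_irrefl)
  then obtain a where a: "a \<noteq> 0" "span B \<subseteq> {x. a \<bullet> x = 0}"
    using span_not_univ_subset_hyperplane by blast
  have "a /\<^sub>R norm a \<in> V \<inter> sphere 0 1"
    using a span_base[of _ B] unfolding V_def orthogonal_def by (auto simp: inner_commute)
  moreover have "compact (V \<inter> sphere 0 1)" using closed_subspace[OF V] by (simp add: closed_Int_compact)
  moreover have "continuous_on (V \<inter> sphere 0 1) (\<lambda>x. x \<bullet> (K *v x))"
    by (intro continuous_intros linear_continuous_on matrix_vector_mul_bounded_linear)
  ultimately obtain v where v: "v \<in> V \<inter> sphere 0 1"
    and vmax: "\<And>y. y \<in> V \<inter> sphere 0 1 \<Longrightarrow> y \<bullet> (K *v y) \<le> v \<bullet> (K *v v)"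
    using continuous_attains_sup[of "V \<inter> sphere 0 1"] by blast
  have vV: "v \<in> V" and nv: "norm v = 1" using v by auto
  have Kv: "K *v v = (v \<bullet> (K *v v)) *\<^sub>R v"
    by (rule eigenvector_if_max_on_invariant_subspace[OF sym V inv vV nv]) (use vmax in auto)
  have "v \<notin> B" using vV nv unfolding V_def orthogonal_def by (auto simp: norm_eq_1)
  moreover have "orthonormal_eigenvectors K (insert v B)"
    using E fin nv Kv vV unfolding orthonormal_eigenvectors_def V_def orthogonal_def
    by (auto simp: inner_commute)
  ultimately show ?thesis by blast
qed

lemma orthonormal_eigenvectors_exist:
  fixes K :: "real^'n^'n"
  assumes sym: "transpose K = K"
  shows "k \<le> CARD('n) \<Longrightarrow> \<exists>B. orthonormal_eigenvectors K B \<and> card B = k"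
proof (induction k)
  case 0
  show ?case by (rule exI[of _ "{}"]) (simp add: orthonormal_eigenvectors_def)
next
  case (Suc k)
  then obtain B where B: "orthonormal_eigenvectors K B" "card B = k" by auto
  then obtain v where "v \<notin> B" "orthonormal_eigenvectors K (insert v B)"
    using orthonormal_eigenvectors_extend[OF sym B(1)] Suc.prems by auto
  moreover have "finite B" using B by (simp add: orthonormal_eigenvectors_def)
  ultimately show ?case using B by (intro exI[of _ "insert v B"]) auto
qed

lemma inner_sum_orthonormal:
  assumes E: "orthonormal_eigenvectors K B" and w: "w \<in> B"
  shows "w \<bullet> (\<Sum>v\<in>B. c v *\<^sub>R v) = c w"
proof -
  have fin: "finite B" using E by (simp add: orthonormal_eigenvectors_def)
  have "w \<bullet> (\<Sum>v\<in>B. c v *\<^sub>R v) = (\<Sum>v\<in>B. c v * (w \<bullet> v))" by (simp add: inner_sum_right)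
  also have "\<dots> = c w * (w \<bullet> w) + (\<Sum>v\<in>B-{w}. c v * (w \<bullet> v))" by (rule sum.remove[OF fin w])
  also have "(\<Sum>v\<in>B-{w}. c v * (w \<bullet> v)) = 0"
    using E w by (intro sum.neutral) (auto simp: orthonormal_eigenvectors_def)
  also have "w \<bullet> w = 1" using E w by (simp add: orthonormal_eigenvectors_def norm_eq_1)
  finally show ?thesis by simp
qed

lemma orthonormal_eigenbasis_exists:
  fixes K :: "real^'n^'n"
  assumes sym: "transpose K = K"
  shows "\<exists>B. orthonormal_eigenvectors K B \<and> (\<forall>x. x = (\<Sum>v\<in>B. (v \<bullet> x) *\<^sub>R v))"
proof -
  obtain B where B: "orthonormal_eigenvectors K B" "card B = CARD('n)"
    using orthonormal_eigenvectors_exist[OF sym] by blast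
  have fin: "finite B" using B by (simp add: orthonormal_eigenvectors_def)
  have indep: "independent B"
    using B by (intro pairwise_orthogonal_independent)
      (auto simp: orthonormal_eigenvectors_def pairwise_def orthogonal_def)
  have "dim (span B) = DIM(real^'n)" using dim_span_eq_card_independent[OF indep] B by simp
  hence sp: "span B = UNIV" using dim_eq_full by (metis dim_span)
  have "x = (\<Sum>v\<in>B. (v \<bullet> x) *\<^sub>R v)" for x
  proof -
    have "x \<in> span B" using sp by simp
    then obtain u where u: "x = (\<Sum>v\<in>B. u v *\<^sub>R v)" using span_finite[OF fin] by blast
    have "v \<bullet> x = u v" if "v \<in> B" for v using inner_sum_orthonormal[OF B(1) that] u by simp
    hence "(\<Sum>v\<in>B. (v \<bullet> x) *\<^sub>R v) = (\<Sum>v\<in>B. u v *\<^sub>R v)" by (intro sum.cong) auto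
    thus ?thesis using u by simp
  qed
  thus ?thesis using B by blast
qed

lemma matrix_vector_eigen_expansion:
  assumes sym: "transpose K = K" and E: "orthonormal_eigenvectors K B"
    and X: "\<forall>x. x = (\<Sum>v\<in>B. (v \<bullet> x) *\<^sub>R v)"
  shows "K *v x = (\<Sum>v\<in>B. ((v \<bullet> (K *v v)) * (v \<bullet> x)) *\<^sub>R v)"
proof -
  have "K *v x = (\<Sum>v\<in>B. (v \<bullet> (K *v x)) *\<^sub>R v)" using X by blast
  also have "\<dots> = (\<Sum>v\<in>B. ((v \<bullet> (K *v v)) * (v \<bullet> x)) *\<^sub>R v)"
  proof (intro sum.cong refl)
    fix v assume v: "v \<in> B"
    have "v \<bullet> (K *v x) = x \<bullet> (K *v v)" by (rule inner_symmetric_matrix_commute[OF sym])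
    also have "\<dots> = (v \<bullet> (K *v v)) * (v \<bullet> x)" using E v
      by (metis orthonormal_eigenvectors_def inner_scaleR_right inner_commute)
    finally show "(v \<bullet> (K *v x)) *\<^sub>R v = ((v \<bullet> (K *v v)) * (v \<bullet> x)) *\<^sub>R v" by simp
  qed
  finally show ?thesis .
qed

lemma quadratic_form_eigen_expansion:
  assumes "transpose K = K" and "orthonormal_eigenvectors K B"
    and "\<forall>x. x = (\<Sum>v\<in>B. (v \<bullet> x) *\<^sub>R v)"
  shows "x \<bullet> (K *v x) = (\<Sum>v\<in>B. (v \<bullet> (K *v v)) * (v \<bullet> x)^2)"
  by (subst matrix_vector_eigen_expansion[OF assms])
    (simp add: inner_sum_right power2_eq_square inner_commute mult.assoc)

lemma outer_matrix_vector: "outer u w *v x = (w \<bullet> x) *\<^sub>R u"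
  by (simp add: vec_eq_iff outer_def matrix_vector_mult_def inner_vec_def sum_distrib_left mult_ac)

lemma sum_matrix_vector: "finite B \<Longrightarrow> (\<Sum>v\<in>B. f v) *v x = (\<Sum>v\<in>B. f v *v x)"
  by (induction B rule: finite_induct) (auto simp: matrix_vector_mult_add_rdistrib)

lemma matrix_eigen_expansion:
  fixes K :: "real^'n^'n"
  assumes sym: "transpose K = K" and E: "orthonormal_eigenvectors K B"
    and X: "\<forall>x. x = (\<Sum>v\<in>B. (v \<bullet> x) *\<^sub>R v)"
  shows "K = (\<Sum>v\<in>B. (v \<bullet> (K *v v)) *\<^sub>R outer v v)"
proof -
  have fin: "finite B" using E by (simp add: orthonormal_eigenvectors_def)
  have "K *v x = (\<Sum>v\<in>B. (v \<bullet> (K *v v)) *\<^sub>R outer v v) *v x" for x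
  proof -
    have "K *v x = (\<Sum>v\<in>B. ((v \<bullet> (K *v v)) * (v \<bullet> x)) *\<^sub>R v)"
      by (rule matrix_vector_eigen_expansion[OF sym E X])
    also have "\<dots> = (\<Sum>v\<in>B. (v \<bullet> (K *v v)) *\<^sub>R outer v v) *v x"
      unfolding sum_matrix_vector[OF fin]
      by (intro sum.cong refl) (simp add: scaleR_matrix_vector_assoc[symmetric] outer_matrix_vector)
    finally show ?thesis .
  qed
  thus ?thesis by (subst matrix_eq) blast
qed

lemma transpose_sum:
  "finite B \<Longrightarrow> transpose (\<Sum>v\<in>B. f v) = (\<Sum>v\<in>B. transpose (f v :: real^'n^'m))"
  by (induction B rule: finite_induct) (auto simp: transpose_def vec_eq_iff)

lemma transpose_outer_self: "transpose (outer u u) = outer u u"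
  by (simp add: vec_eq_iff transpose_def outer_def mult.commute)

lemma psd_outer_self: "psd_mat (outer w w)"
  by (simp add: psd_mat_def transpose_outer_self outer_matrix_vector inner_commute)

lemma psd_kernel_if_quadratic_zero:
  assumes R: "psd_mat R" and z: "v \<bullet> (R *v v) = 0"
  shows "R *v v = 0"
proof -
  have sym: "transpose R = R" using R by (simp add: psd_mat_def)
  have "0 \<le> 2*t*((R *v v) \<bullet> (R *v v)) + t^2*((R *v v) \<bullet> (R *v (R *v v)))" for t
  proof -
    have "0 \<le> (v + t *\<^sub>R (R *v v)) \<bullet> (R *v (v + t *\<^sub>R (R *v v)))" using R by (simp add: psd_mat_def)
    also have "\<dots> = 2*t*((R *v v) \<bullet> (R *v v)) + t^2*((R *v v) \<bullet> (R *v (R *v v)))"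
      using z inner_symmetric_matrix_commute[OF sym, of v "R *v v"]
      by (simp add: matrix_vector_right_distrib matrix_vector_mult_scaleR inner_add_left
          inner_add_right power2_eq_square algebra_simps)
    finally show ?thesis .
  qed
  from linear_coeff_zero_if_quadratic_nonneg[OF this] show ?thesis by simp
qed

lemma psd_sqrt_exists:
  fixes K :: "real^'n^'n"
  assumes K: "psd_mat K"
  shows "\<exists>R. psd_mat R \<and> R ** R = K"
proof -
  have sym: "transpose K = K" using K by (simp add: psd_mat_def)
  obtain B where E: "orthonormal_eigenvectors K B" and X: "\<forall>x. x = (\<Sum>v\<in>B. (v \<bullet> x) *\<^sub>R v)"
    using orthonormal_eigenbasis_exists[OF sym] by blast
  have fin: "finite B" using E by (simp add: orthonormal_eigenvectors_def)
  define lam where "lam v = v \<bullet> (K *v v)" for v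
  have lam0: "lam v \<ge> 0" for v using K by (simp add: lam_def psd_mat_def)
  define R where "R = (\<Sum>v\<in>B. sqrt (lam v) *\<^sub>R outer v v)"
  have Rx: "R *v x = (\<Sum>v\<in>B. (sqrt (lam v) * (v \<bullet> x)) *\<^sub>R v)" for x
    unfolding R_def
    by (simp add: sum_matrix_vector[OF fin] outer_matrix_vector scaleR_matrix_vector_assoc[symmetric])
  have "x \<bullet> (R *v x) = (\<Sum>v\<in>B. sqrt (lam v) * (v \<bullet> x)^2)" for x
    unfolding Rx by (simp add: inner_sum_right power2_eq_square inner_commute mult.assoc)
  moreover have "transpose R = R"
    unfolding R_def by (simp add: transpose_sum[OF fin] transpose_scalar transpose_outer_self)
  ultimately have psdR: "psd_mat R"
    using lam0 by (auto simp: psd_mat_def intro!: sum_nonneg mult_nonneg_nonneg)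
  have "(R ** R) *v x = K *v x" for x
  proof -
    have "(R ** R) *v x = R *v (R *v x)" by (simp add: matrix_vector_mul_assoc)
    also have "\<dots> = (\<Sum>w\<in>B. (sqrt (lam w) * (w \<bullet> (R *v x))) *\<^sub>R w)" by (rule Rx)
    also have "\<dots> = (\<Sum>w\<in>B. (lam w * (w \<bullet> x)) *\<^sub>R w)"
    proof (intro sum.cong refl)
      fix w assume w: "w \<in> B"
      have "w \<bullet> (R *v x) = sqrt (lam w) * (w \<bullet> x)" unfolding Rx by (rule inner_sum_orthonormal[OF E w])
      thus "(sqrt (lam w) * (w \<bullet> (R *v x))) *\<^sub>R w = (lam w * (w \<bullet> x)) *\<^sub>R w"
        using lam0[of w] by (simp add: mult.assoc[symmetric])
    qed
    also have "\<dots> = K *v x"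
      unfolding lam_def by (rule matrix_vector_eigen_expansion[OF sym E X, symmetric])
    finally show ?thesis .
  qed
  hence "R ** R = K" by (simp add: matrix_eq)
  thus ?thesis using psdR by blast
qed

text \<open>With \<open>D = R\<^sub>1 - R\<^sub>2\<close> and \<open>\<Sigma> = R\<^sub>1 + R\<^sub>2\<close>, equal squares give \<open>D\<Sigma> + \<Sigma>D = 0\<close>; on an
  eigenvector of \<open>D\<close> with nonzero eigenvalue this forces the positive form \<open>\<Sigma>\<close> to vanish.\<close>
lemma psd_sqrt_unique:
  fixes R1 R2 :: "real^'n^'n"
  assumes P1: "psd_mat R1" and P2: "psd_mat R2" and eq: "R1 ** R1 = R2 ** R2"
  shows "R1 = R2"
proof -
  define D where "D = R1 - R2"
  define Sm where "Sm = R1 + R2"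
  have s1: "transpose R1 = R1" and s2: "transpose R2 = R2" using P1 P2 by (auto simp: psd_mat_def)
  have symD: "transpose D = D" unfolding D_def using s1 s2 by (simp add: vec_eq_iff transpose_def)
  have comm: "D *v (Sm *v x) + Sm *v (D *v x) = 0" for x
  proof -
    have "D *v (Sm *v x) + Sm *v (D *v x) = 2 *\<^sub>R ((R1 ** R1) *v x - (R2 ** R2) *v x)"
      unfolding D_def Sm_def
      by (simp add: matrix_vector_mult_diff_rdistrib matrix_vector_mult_add_rdistrib
          matrix_vector_right_distrib matrix_vector_mult_diff_distrib
          matrix_vector_mul_assoc[symmetric] algebra_simps scaleR_2)
    thus ?thesis using eq by simp
  qed
  obtain B where E: "orthonormal_eigenvectors D B" and X: "\<forall>x. x = (\<Sum>v\<in>B. (v \<bullet> x) *\<^sub>R v)"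
    using orthonormal_eigenbasis_exists[OF symD] by blast
  have mu0: "v \<bullet> (D *v v) = 0" if v: "v \<in> B" for v
  proof (rule ccontr)
    define mu where "mu = v \<bullet> (D *v v)"
    assume "v \<bullet> (D *v v) \<noteq> 0"
    hence mu: "mu \<noteq> 0" by (simp add: mu_def)
    have Dv: "D *v v = mu *\<^sub>R v" using E v by (simp add: orthonormal_eigenvectors_def mu_def)
    have "0 = v \<bullet> (D *v (Sm *v v)) + v \<bullet> (Sm *v (D *v v))"
      using comm[of v] by (metis inner_add_right inner_zero_right)
    also have "v \<bullet> (D *v (Sm *v v)) = (Sm *v v) \<bullet> (D *v v)"
      by (rule inner_symmetric_matrix_commute[OF symD])
    also have "\<dots> = mu * (v \<bullet> (Sm *v v))" unfolding Dv by (simp add: inner_commute)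
    also have "v \<bullet> (Sm *v (D *v v)) = mu * (v \<bullet> (Sm *v v))" unfolding Dv
      by (simp add: matrix_vector_mult_scaleR)
    finally have "v \<bullet> (Sm *v v) = 0" using mu by simp
    hence "v \<bullet> (R1 *v v) + v \<bullet> (R2 *v v) = 0"
      unfolding Sm_def by (simp add: matrix_vector_mult_add_rdistrib inner_add_right)
    moreover have "v \<bullet> (R1 *v v) \<ge> 0" "v \<bullet> (R2 *v v) \<ge> 0" using P1 P2 by (auto simp: psd_mat_def)
    ultimately have "v \<bullet> (R1 *v v) = 0" "v \<bullet> (R2 *v v) = 0" by linarith+
    hence "R1 *v v = 0" "R2 *v v = 0" using psd_kernel_if_quadratic_zero P1 P2 by blast+
    hence "mu *\<^sub>R v = 0" using Dv unfolding D_def by (simp add: matrix_vector_mult_diff_rdistrib)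
    moreover have "v \<noteq> 0" using E v by (auto simp: orthonormal_eigenvectors_def)
    ultimately show False using mu by simp
  qed
  have "D *v x = 0" for x
    using matrix_vector_eigen_expansion[OF symD E X, of x] mu0 by simp
  hence "D = 0" by (simp add: matrix_eq)
  thus ?thesis unfolding D_def by simp
qed

lemma msqrt_psd:
  assumes "psd_mat (M::real^'n^'n)"
  shows "psd_mat (msqrt M)" and "msqrt M ** msqrt M = M"
proof -
  obtain R where R: "psd_mat R \<and> R ** R = M" using psd_sqrt_exists[OF assms] by blast
  have "\<exists>!R. psd_mat R \<and> R ** R = M"
    using R psd_sqrt_unique by (intro ex1I[of _ R]) auto
  hence "psd_mat (msqrt M) \<and> msqrt M ** msqrt M = M" unfolding msqrt_def by (rule theI')
  thus "psd_mat (msqrt M)" and "msqrt M ** msqrt M = M" by auto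
qed

lemma invertible_matrix_inv:
  "invertible (A::real^'n^'n) \<Longrightarrow> A ** matrix_inv A = mat 1 \<and> matrix_inv A ** A = mat 1"
  unfolding matrix_inv_def invertible_def by (rule someI_ex)

lemma matrix_inv_unique:
  assumes "invertible (A::real^'n^'n)" "A ** B = mat 1"
  shows "matrix_inv A = B"
proof -
  have "matrix_inv A = matrix_inv A ** (A ** B)" using assms(2) by simp
  also have "\<dots> = (matrix_inv A ** A) ** B" by (simp add: matrix_mul_assoc)
  also have "\<dots> = B" using invertible_matrix_inv[OF assms(1)] by simp
  finally show ?thesis .
qed

lemma invertible_if_trivial_kernel: "(\<And>x. (A::real^'n^'n) *v x = 0 \<Longrightarrow> x = 0) \<Longrightarrow> invertible A"
  using invertible_left_inverse matrix_left_invertible_ker by blast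

lemma pd_invertible: "pd_mat (A::real^'n^'n) \<Longrightarrow> invertible A"
  by (rule invertible_if_trivial_kernel) (metis pd_mat_def inner_zero_right less_irrefl)

lemma pd_imp_psd: "pd_mat A \<Longrightarrow> psd_mat A"
  unfolding pd_mat_def psd_mat_def
  by (metis inner_zero_left matrix_vector_mult_0_right order_le_less)

lemma symmetric_matrix_inv:
  assumes "invertible (A::real^'n^'n)" "transpose A = A"
  shows "transpose (matrix_inv A) = matrix_inv A"
proof -
  have "A ** transpose (matrix_inv A) = transpose (matrix_inv A ** A)"
    using assms(2) by (simp add: matrix_transpose_mul)
  also have "\<dots> = mat 1" using invertible_matrix_inv[OF assms(1)] by simp
  finally show ?thesis using matrix_inv_unique[OF assms(1)] by metis
qed

lemma qform_matrix_vector: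
  assumes "transpose T = T"
  shows "qform T (B *v u) = qform (transpose B ** T ** B) u"
proof -
  have "qform T (B *v u) = (B *v u) \<bullet> ((T ** B) *v u)" by (simp add: qform_def matrix_vector_mul_assoc)
  also have "\<dots> = (transpose (T ** B) *v (B *v u)) \<bullet> u" by (rule inner_matrix_vector_transpose)
  also have "\<dots> = ((transpose B ** T ** B) *v u) \<bullet> u"
    using assms by (simp only: matrix_transpose_mul matrix_vector_mul_assoc matrix_mul_assoc)
  finally show ?thesis by (simp add: qform_def inner_commute)
qed

lemma qform_scaleR: "qform T (c *\<^sub>R v) = c^2 * qform T v"
  by (simp add: qform_def matrix_vector_mult_scaleR power2_eq_square)

lemma qform_uminus: "qform T (- v) = qform T v"
  using qform_scaleR[of T "-1" v] by simp

lemma qform_nonneg: "psd_mat T \<Longrightarrow> qform T v \<ge> 0"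
  by (simp add: psd_mat_def qform_def)

lemma qform_eq_sum_entries: "qform T v = (\<Sum>a\<in>UNIV. \<Sum>b\<in>UNIV. T $ a $ b * (v $ a * v $ b))"
  by (simp add: qform_def inner_vec_def matrix_vector_mult_def sum_distrib_left mult_ac)

lemma qform_scaleR_outer: "qform (c *\<^sub>R outer x x) u = c * (u \<bullet> x)^2"
  by (simp add: qform_def scaleR_matrix_vector_assoc[symmetric] outer_matrix_vector
      power2_eq_square inner_commute)

lemma outer_sandwich: "outer x x ** outer w w ** outer x x = ((x \<bullet> w)^2) *\<^sub>R outer x x"
proof -
  have "(outer x x ** outer w w ** outer x x) *v u = (((x \<bullet> w)^2) *\<^sub>R outer x x) *v u" for u
    by (simp add: matrix_vector_mul_assoc[symmetric] outer_matrix_vector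
        scaleR_matrix_vector_assoc[symmetric] matrix_vector_mult_scaleR power2_eq_square inner_commute)
  thus ?thesis by (simp add: matrix_eq)
qed

lemma trace_mult_outer: "trace (S ** outer w w) = w \<bullet> (S *v w)"
  by (simp add: trace_def matrix_matrix_mult_def outer_def inner_vec_def matrix_vector_mult_def
      sum_distrib_left mult_ac)

lemma trace_sum: "finite B \<Longrightarrow> trace (\<Sum>v\<in>B. f v) = (\<Sum>v\<in>B. trace (f v :: real^'n^'n))"
  by (simp add: trace_def sum_component sum.swap[of _ UNIV B])

lemma trace_scaleR: "trace (c *\<^sub>R (A::real^'n^'n)) = c * trace A"
  by (simp add: trace_def sum_distrib_left)

lemma matrix_mult_sum_right:
  "finite B \<Longrightarrow> (S::real^'n^'n) ** (\<Sum>v\<in>B. f v) = (\<Sum>v\<in>B. S ** f v)"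
  by (induction B rule: finite_induct) (auto simp: matrix_add_ldistrib)

lemma psd_congruence:
  assumes pT: "psd_mat T"
  shows "psd_mat (transpose C ** T ** C)"
proof -
  have sT: "transpose T = T" using pT by (simp add: psd_mat_def)
  have "x \<bullet> ((transpose C ** T ** C) *v x) = qform T (C *v x)" for x
    by (simp only: qform_matrix_vector[OF sT]) (simp add: qform_def)
  thus ?thesis
    using qform_nonneg[OF pT] by (simp add: psd_mat_def matrix_transpose_mul sT matrix_mul_assoc)
qed

lemma matrix_vector_mult_sum: "(A::real^'n^'m) *v (\<Sum>i\<in>I. f i) = (\<Sum>i\<in>I. A *v f i)"
  by (induction I rule: infinite_finite_induct) (auto simp: matrix_vector_right_distrib)

lemma trace_mult_eigen_expansion:
  fixes S K :: "real^'d^'d"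
  assumes sym: "transpose K = K" and E: "orthonormal_eigenvectors K B"
    and X: "\<forall>x. x = (\<Sum>v\<in>B. (v \<bullet> x) *\<^sub>R v)"
  shows "trace (S ** K) = (\<Sum>v\<in>B. (v \<bullet> (K *v v)) * qform S v)"
proof -
  have fin: "finite B" using E by (simp add: orthonormal_eigenvectors_def)
  define lam where "lam v = v \<bullet> (K *v v)" for v
  have "K = (\<Sum>v\<in>B. lam v *\<^sub>R outer v v)"
    unfolding lam_def by (rule matrix_eigen_expansion[OF sym E X])
  hence "S ** K = (\<Sum>v\<in>B. lam v *\<^sub>R (S ** outer v v))"
    by (simp add: matrix_mult_sum_right[OF fin] matrix_scalar_ac scalar_matrix_assoc)
  thus ?thesis by (simp add: trace_sum[OF fin] trace_scaleR trace_mult_outer qform_def lam_def)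
qed

lemma trace_mult_psd_nonneg:
  fixes S K :: "real^'d^'d"
  assumes "psd_mat S" and K: "psd_mat K"
  shows "trace (S ** K) \<ge> 0"
proof -
  have sym: "transpose K = K" using K by (simp add: psd_mat_def)
  obtain B where E: "orthonormal_eigenvectors K B" and X: "\<forall>x. x = (\<Sum>v\<in>B. (v \<bullet> x) *\<^sub>R v)"
    using orthonormal_eigenbasis_exists[OF sym] by blast
  show ?thesis
    unfolding trace_mult_eigen_expansion[OF sym E X] using assms
    by (auto simp: psd_mat_def qform_def intro!: sum_nonneg mult_nonneg_nonneg)
qed

lemma inner_le_spec_norm:
  assumes "norm u \<le> 1"
  shows "u \<bullet> (Q *v u) \<le> spec_norm Q"
proof -
  have bl: "bounded_linear ((*v) Q)" by (rule matrix_vector_mul_bounded_linear)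
  have on: "onorm ((*v) Q) \<ge> 0" by (rule onorm_pos_le[OF bl])
  have "u \<bullet> (Q *v u) \<le> norm u * norm (Q *v u)" by (rule norm_cauchy_schwarz)
  also have "\<dots> \<le> norm u * (onorm ((*v) Q) * norm u)" by (intro mult_left_mono onorm[OF bl]) auto
  also have "\<dots> \<le> 1 * (onorm ((*v) Q) * 1)"
    using assms on by (intro mult_mono) auto
  finally show ?thesis by (simp add: spec_norm_def)
qed

text \<open>Here \<open>R = M\<^sup>1\<^sup>/\<^sup>2\<close>, \<open>Mi = R\<^sup>-\<^sup>1\<close> and \<open>Si = S\<^sup>-\<^sup>1\<close>, so that \<open>Mi ** S ** Mi\<close> and \<open>Mi ** T ** Mi\<close> are the
  whitened matrices \<open>S'\<close> and \<open>T'\<close>.\<close>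
locale whitening =
  fixes R Mi S Si T :: "real^'n^'n"
  assumes RMi: "R ** Mi = mat 1" and MiR: "Mi ** R = mat 1"
    and SSi: "S ** Si = mat 1" and SiS: "Si ** S = mat 1"
    and sR: "transpose R = R" and sMi: "transpose Mi = Mi" and sS: "transpose S = S"
    and sSi: "transpose Si = Si" and sT: "transpose T = T"
begin

lemma right_cancel_R_Mi: "X ** R ** Mi = X"
  by (metis RMi matrix_mul_assoc matrix_mul_rid)

lemma right_cancel_Mi_R: "X ** Mi ** R = X"
  by (metis MiR matrix_mul_assoc matrix_mul_rid)

lemma right_cancel_S_Si: "X ** S ** Si = X"
  by (metis SSi matrix_mul_assoc matrix_mul_rid)

lemma right_cancel_Si_S: "X ** Si ** S = X"
  by (metis SiS matrix_mul_assoc matrix_mul_rid)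

lemma estimator_bias_eq:
  "(Mi ** A ** R ** Si) *v (S *v w) - w = - ((Mi ** (mat 1 - A)) *v (R *v w))"
proof -
  have "(Mi ** A ** R ** Si) *v (S *v w) = (Mi ** A ** R) *v w"
    by (simp only: matrix_vector_mul_assoc right_cancel_Si_S)
  moreover have "(Mi ** (mat 1 - A)) *v (R *v w) = Mi *v (R *v w) - Mi *v (A *v (R *v w))"
    by (simp only: matrix_vector_mul_assoc[symmetric] matrix_vector_mult_diff_rdistrib
          matrix_vector_mult_diff_distrib matrix_vector_mul_lid)
  moreover have "Mi *v (R *v w) = w"
    by (simp only: matrix_vector_mul_assoc MiR matrix_vector_mul_lid)
  moreover have "Mi *v (A *v (R *v w)) = (Mi ** A ** R) *v w"
    by (simp only: matrix_vector_mul_assoc matrix_mul_assoc)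
  ultimately show ?thesis by simp
qed

lemma qform_whitened:
  "qform T ((Mi ** B) *v u) = u \<bullet> ((transpose B ** (Mi ** T ** Mi) ** B) *v u)"
  unfolding qform_matrix_vector[OF sT]
  by (simp only: qform_def matrix_transpose_mul sMi matrix_mul_assoc)

lemma trace_whitened:
  "trace (S ** (transpose (Mi ** A ** R ** Si) ** T ** (Mi ** A ** R ** Si)))
   = trace ((Mi ** T ** Mi) ** (A ** (R ** Si ** R) ** transpose A))"
proof -
  have tC: "transpose (Mi ** A ** R ** Si) = Si ** R ** transpose A ** Mi"
    by (simp only: matrix_transpose_mul sMi sR sSi matrix_mul_assoc)
  have "S ** (Si ** R ** transpose A ** Mi ** T ** (Mi ** A ** R ** Si))
      = (S ** Si) ** (R ** transpose A) ** (Mi ** T ** Mi ** A ** R ** Si)"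
    by (simp only: matrix_mul_assoc)
  also have "\<dots> = (R ** transpose A) ** (Mi ** T ** Mi ** A ** R ** Si)"
    by (simp only: SSi matrix_mul_lid)
  finally have "S ** (transpose (Mi ** A ** R ** Si) ** T ** (Mi ** A ** R ** Si))
      = (R ** transpose A) ** (Mi ** T ** Mi ** A ** R ** Si)"
    unfolding tC .
  moreover have "trace ((R ** transpose A) ** (Mi ** T ** Mi ** A ** R ** Si))
      = trace ((Mi ** T ** Mi ** A ** R ** Si) ** (R ** transpose A))"
    by (rule trace_mul_sym)
  moreover have "(Mi ** T ** Mi ** A ** R ** Si) ** (R ** transpose A)
      = (Mi ** T ** Mi) ** (A ** (R ** Si ** R) ** transpose A)"
    by (simp only: matrix_mul_assoc)
  ultimately show ?thesis by simp
qed

lemma qform_S_whitened: "w \<bullet> (S *v w) = (R *v w) \<bullet> ((Mi ** S ** Mi) *v (R *v w))"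
proof -
  have "(Mi ** S ** Mi) *v (R *v w) = Mi *v (S *v w)"
    by (simp only: matrix_vector_mul_assoc right_cancel_Mi_R)
  hence "(R *v w) \<bullet> ((Mi ** S ** Mi) *v (R *v w)) = (transpose Mi *v (R *v w)) \<bullet> (S *v w)"
    by (simp only: inner_matrix_vector_transpose)
  also have "\<dots> = w \<bullet> (S *v w)" by (simp only: sMi matrix_vector_mul_assoc MiR matrix_vector_mul_lid)
  finally show ?thesis by simp
qed

lemma bias_le_spec_norm:
  assumes "norm (R *v w) \<le> 1"
  shows "qform T ((Mi ** A ** R ** Si) *v (S *v w) - w)
    \<le> spec_norm (transpose (mat 1 - A) ** (Mi ** T ** Mi) ** (mat 1 - A))"
  unfolding estimator_bias_eq qform_uminus qform_whitened by (rule inner_le_spec_norm[OF assms])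

lemma qform_S_le_spec_norm:
  assumes "norm (R *v w) \<le> 1"
  shows "w \<bullet> (S *v w) \<le> spec_norm (Mi ** S ** Mi)"
  unfolding qform_S_whitened by (rule inner_le_spec_norm[OF assms])

lemma inner_R_self: "(R *v w) \<bullet> (R *v w) = w \<bullet> ((R ** R) *v w)"
proof -
  have "(R *v w) \<bullet> (R *v w) = (transpose R *v (R *v w)) \<bullet> w" by (rule inner_matrix_vector_transpose)
  also have "\<dots> = ((R ** R) *v w) \<bullet> w" by (simp only: sR matrix_vector_mul_assoc)
  finally show ?thesis by (simp only: inner_commute)
qed

lemma matrix_inv_whitened_S: "matrix_inv (Mi ** S ** Mi) = R ** Si ** R"
proof (rule matrix_inv_unique)
  show "(Mi ** S ** Mi) ** (R ** Si ** R) = mat 1"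
    by (simp only: matrix_mul_assoc right_cancel_Mi_R right_cancel_S_Si MiR)
  moreover have "(R ** Si ** R) ** (Mi ** S ** Mi) = mat 1"
    by (simp only: matrix_mul_assoc right_cancel_R_Mi right_cancel_Si_S RMi)
  ultimately show "invertible (Mi ** S ** Mi)" unfolding invertible_def by blast
qed

lemma symmetric_whitened_T: "transpose (Mi ** T ** Mi) = Mi ** T ** Mi"
  by (simp only: matrix_transpose_mul sMi sT matrix_mul_assoc)

end

lemma whitening_msqrt:
  assumes pM: "pd_mat M" and pS: "pd_mat S" and pT: "psd_mat T"
  shows "whitening (msqrt M) (matrix_inv (msqrt M)) S (matrix_inv S) T"
proof -
  note R = msqrt_psd[OF pd_imp_psd[OF pM]]
  have sR: "transpose (msqrt M) = msqrt M" using R(1) by (simp add: psd_mat_def)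
  have invR: "invertible (msqrt M)"
  proof (rule invertible_if_trivial_kernel)
    fix x assume "msqrt M *v x = 0"
    hence "M *v x = 0" by (metis R(2) matrix_vector_mul_assoc matrix_vector_mult_0_right)
    thus "x = 0" using pM by (metis pd_mat_def inner_zero_right less_irrefl)
  qed
  have invS: "invertible S" by (rule pd_invertible[OF pS])
  have sS: "transpose S = S" using pS by (simp add: pd_mat_def)
  show ?thesis
    using invertible_matrix_inv[OF invR] invertible_matrix_inv[OF invS] sR sS
      symmetric_matrix_inv[OF invR sR] symmetric_matrix_inv[OF invS sS] pT
    by unfold_locales (auto simp: psd_mat_def)
qed

section \<open>Integrability under a finite fourth moment\<close>

definition poly_bounded :: "nat \<Rightarrow> ('a::real_normed_vector \<Rightarrow> real) \<Rightarrow> bool" where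
  "poly_bounded k f \<longleftrightarrow> (\<exists>c. \<forall>z. \<bar>f z\<bar> \<le> c * (1 + norm z) ^ k)"

lemma poly_boundedI: "(\<And>z. \<bar>f z\<bar> \<le> c * (1 + norm z) ^ k) \<Longrightarrow> poly_bounded k f"
  unfolding poly_bounded_def by blast

lemma poly_boundedE:
  assumes "poly_bounded k f"
  obtains c where "c \<ge> 0" "\<And>z. \<bar>f z\<bar> \<le> c * (1 + norm z) ^ k"
proof -
  obtain c where c: "\<And>z. \<bar>f z\<bar> \<le> c * (1 + norm z) ^ k" using assms unfolding poly_bounded_def by blast
  have "\<bar>f 0\<bar> \<le> c" using c[of 0] by simp
  hence "0 \<le> c" using abs_ge_zero[of "f 0"] by linarith
  with c that show thesis by blast
qed

lemma poly_bounded_mono: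
  assumes "poly_bounded k f" "k \<le> l"
  shows "poly_bounded l f"
proof -
  obtain c where "c \<ge> 0" and c: "\<And>z. \<bar>f z\<bar> \<le> c * (1 + norm z) ^ k"
    using poly_boundedE[OF assms(1)] by blast
  have "\<bar>f z\<bar> \<le> c * (1 + norm z) ^ l" for z
    using c[of z] \<open>c \<ge> 0\<close> power_increasing[OF assms(2), of "1 + norm z"]
    by (smt (verit) mult_left_mono norm_ge_zero)
  thus ?thesis by (rule poly_boundedI)
qed

lemma poly_bounded_diff:
  assumes "poly_bounded k f" "poly_bounded k g"
  shows "poly_bounded k (\<lambda>z. f z - g z)"
proof -
  obtain a where a: "\<And>z. \<bar>f z\<bar> \<le> a * (1 + norm z) ^ k" using poly_boundedE[OF assms(1)] by blast
  obtain b where b: "\<And>z. \<bar>g z\<bar> \<le> b * (1 + norm z) ^ k" using poly_boundedE[OF assms(2)] by blast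
  have "\<bar>f z - g z\<bar> \<le> (a + b) * (1 + norm z) ^ k" for z
    using a[of z] b[of z] by (simp add: distrib_right)
  thus ?thesis by (rule poly_boundedI)
qed

lemma poly_bounded_mult:
  assumes "poly_bounded k f" "poly_bounded l g"
  shows "poly_bounded (k + l) (\<lambda>z. f z * g z)"
proof -
  obtain a where "a \<ge> 0" and a: "\<And>z. \<bar>f z\<bar> \<le> a * (1 + norm z) ^ k"
    using poly_boundedE[OF assms(1)] by blast
  obtain b where "b \<ge> 0" and b: "\<And>z. \<bar>g z\<bar> \<le> b * (1 + norm z) ^ l"
    using poly_boundedE[OF assms(2)] by blast
  have "\<bar>f z * g z\<bar> \<le> (a * b) * (1 + norm z) ^ (k + l)" for z
  proof -
    have "\<bar>f z * g z\<bar> \<le> (a * (1 + norm z) ^ k) * (b * (1 + norm z) ^ l)"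
      unfolding abs_mult using a[of z] b[of z] \<open>a \<ge> 0\<close> by (intro mult_mono) auto
    thus ?thesis by (simp add: power_add mult_ac)
  qed
  thus ?thesis by (rule poly_boundedI)
qed

lemma poly_bounded_bounded_linear:
  assumes "bounded_linear f"
  shows "poly_bounded 1 f"
proof -
  obtain K where "K > 0" and K: "\<And>z. norm (f z) \<le> norm z * K"
    using bounded_linear.pos_bounded[OF assms] by blast
  have "\<bar>f z\<bar> \<le> K * (1 + norm z) ^ 1" for z
    using K[of z] \<open>K > 0\<close> by (simp add: algebra_simps)
  thus ?thesis by (rule poly_boundedI)
qed

lemma poly_bounded_fst_inner: "poly_bounded 1 (\<lambda>z::'a::real_inner \<times> real. fst z \<bullet> u)"
  by (intro poly_bounded_bounded_linear bounded_linear_compose[OF bounded_linear_inner_left]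
      bounded_linear_fst)

lemma poly_bounded_inner_fst: "poly_bounded 1 (\<lambda>z::'a::real_inner \<times> real. u \<bullet> fst z)"
  using poly_bounded_fst_inner[of u] by (simp add: inner_commute)

lemma poly_bounded_snd: "poly_bounded 1 (\<lambda>z::'a::real_normed_vector \<times> real. snd z)"
  by (intro poly_bounded_bounded_linear bounded_linear_snd)

lemma poly_bounded_fst_nth: "poly_bounded 1 (\<lambda>z::(real^'n) \<times> real. fst z $ i)"
  using poly_bounded_fst_inner[of "axis i 1"] by (simp add: cart_eq_inner_axis)

lemma one_plus_power4_le: "(1 + t) ^ 4 \<le> 8 * (1 + t ^ 4)" if "t \<ge> 0" for t :: real
proof -
  have "8 * (1 + t ^ 4) - (1 + t) ^ 4 = (t - 1)^2 * (7 * t^2 + 10 * t + 7)"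
    by (simp add: algebra_simps power2_eq_square power4_eq_xxxx)
  moreover have "0 \<le> (t - 1)^2 * (7 * t^2 + 10 * t + 7)" using that by simp
  ultimately show ?thesis by linarith
qed

lemma integrable_poly_bounded:
  fixes f :: "'a::real_normed_vector \<Rightarrow> real"
  assumes P: "prob_space P" and m4: "integrable P (\<lambda>z. norm z ^ 4)"
    and f: "poly_bounded k f" and k: "k \<le> 4" and m: "f \<in> borel_measurable P"
  shows "integrable P f"
proof -
  interpret prob_space P by fact
  obtain c where "c \<ge> 0" and c: "\<And>z. \<bar>f z\<bar> \<le> c * (1 + norm z) ^ 4"
    using poly_boundedE[OF poly_bounded_mono[OF f k]] by blast
  have int: "integrable P (\<lambda>z. 8 * c * (1 + norm z ^ 4))"
    using m4 by (intro integrable_mult_right Bochner_Integration.integrable_add) auto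
  have bnd:  "norm (f z) \<le> norm (8 * c * (1 + norm z ^ 4))" for z
  proof -
    have "\<bar>f z\<bar> \<le> c * (1 + norm z) ^ 4" by (rule c)
    also have "\<dots> \<le> c * (8 * (1 + norm z ^ 4))"
      using \<open>c \<ge> 0\<close> by (intro mult_left_mono one_plus_power4_le) auto
    finally have "\<bar>f z\<bar> \<le> 8 * c * (1 + norm z ^ 4)" by (simp only: mult.left_commute mult.assoc)
    moreover have "0 \<le> 8 * c * (1 + norm z ^ 4)" using \<open>c \<ge> 0\<close> by simp
    ultimately show ?thesis by simp
  qed
  show ?thesis by (rule Bochner_Integration.integrable_bound[OF int m]) (use bnd in auto)
qed

lemma measurable_continuous_on_borel_sets:
  assumes "sets P = sets borel" "continuous_on UNIV f"
  shows "f \<in> borel_measurable P"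
  using borel_measurable_continuous_onI[OF assms(2)] by (simp add: measurable_cong_sets[OF assms(1) refl])

lemma integrable_matrix_entries:
  fixes F :: "_ \<Rightarrow> real^'n^'m"
  assumes "\<And>i j. integrable P (\<lambda>z. F z $ i $ j)"
  shows "integrable P F"
proof -
  have delta: "(\<Sum>j\<in>UNIV. c j * (if l = j then 1 else 0)) = c l" for c :: "'n \<Rightarrow> real" and l
  proof -
    have "(\<Sum>j\<in>UNIV. c j * (if l = j then 1 else 0)) = (\<Sum>j\<in>UNIV. if j = l then c j else 0)"
      by (intro sum.cong) auto
    thus ?thesis by simp
  qed
  have F: "F z = (\<Sum>i\<in>UNIV. \<Sum>j\<in>UNIV. (F z $ i $ j) *\<^sub>R axis i (axis j 1))" for z
  proof -
    have "(\<Sum>i\<in>UNIV. \<Sum>j\<in>UNIV. (F z $ i $ j) *\<^sub>R (axis i (axis j 1) :: real^'n^'m)) $ k $ l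
        = F z $ k $ l" for k l
    proof -
      have "(\<Sum>i\<in>UNIV. \<Sum>j\<in>UNIV. (F z $ i $ j) *\<^sub>R (axis i (axis j 1) :: real^'n^'m)) $ k $ l
          = (\<Sum>i\<in>UNIV. \<Sum>j\<in>UNIV. F z $ i $ j * ((axis i (axis j 1) :: real^'n^'m) $ k $ l))"
        by (simp add: sum_component)
      also have "\<dots> = (\<Sum>i\<in>UNIV. if i = k then (\<Sum>j\<in>UNIV. if j = l then F z $ i $ j else 0) else 0)"
        by (intro sum.cong refl) (auto simp: axis_def delta)
      finally show ?thesis by simp
    qed
    thus ?thesis by (simp add: vec_eq_iff)
  qed
  have "integrable P (\<lambda>z. \<Sum>i\<in>UNIV. \<Sum>j\<in>UNIV. (F z $ i $ j) *\<^sub>R (axis i (axis j 1) :: real^'n^'m))"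
    using assms by (intro Bochner_Integration.integrable_sum integrable_scaleR_left) auto
  thus ?thesis by (subst (asm) F[symmetric])
qed

lemma integral_matrix_entry:
  fixes F :: "_ \<Rightarrow> real^'n^'m"
  assumes "integrable P F"
  shows "integral\<^sup>L P F $ i $ j = (\<integral>z. F z $ i $ j \<partial>P)"
    and "integrable P (\<lambda>z. F z $ i $ j)"
proof -
  have bl: "bounded_linear (\<lambda>A::real^'n^'m. A $ i $ j)"
    using bounded_linear_compose[OF bounded_linear_vec_nth[of j] bounded_linear_vec_nth[of i]] by simp
  show "integral\<^sup>L P F $ i $ j = (\<integral>z. F z $ i $ j \<partial>P)"
    using integral_bounded_linear[OF bl assms] by simp
  show "integrable P (\<lambda>z. F z $ i $ j)"
    using integrable_bounded_linear[OF bl assms] by simp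
qed

lemma qform_integral:
  fixes F :: "_ \<Rightarrow> real^'n^'n"
  assumes F: "integrable P F"
  shows "qform (integral\<^sup>L P F) u = (\<integral>z. qform (F z) u \<partial>P)"
proof -
  have ij: "integrable P (\<lambda>z. F z $ a $ b * (u $ a * u $ b))" for a b
    using integral_matrix_entry(2)[OF F] by (rule integrable_mult_left)
  have "qform (integral\<^sup>L P F) u = (\<Sum>a\<in>UNIV. \<Sum>b\<in>UNIV. (\<integral>z. F z $ a $ b * (u $ a * u $ b) \<partial>P))"
    by (simp add: qform_eq_sum_entries integral_matrix_entry(1)[OF F])
  also have "\<dots> = (\<integral>z. (\<Sum>a\<in>UNIV. \<Sum>b\<in>UNIV. F z $ a $ b * (u $ a * u $ b)) \<partial>P)"
    using ij by (simp add: Bochner_Integration.integral_sum Bochner_Integration.integrable_sum)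
  finally show ?thesis by (simp add: qform_eq_sum_entries)
qed

section \<open>Sample means under product measures\<close>

lemma integral_PiM_prod:
  assumes P: "prob_space P" and fin: "finite I" and F: "\<And>i. i \<in> I \<Longrightarrow> integrable P (F i :: _ \<Rightarrow> real)"
  shows "integrable (PiM I (\<lambda>_. P)) (\<lambda>\<omega>. \<Prod>i\<in>I. F i (\<omega> i))"
    and "(\<integral>\<omega>. (\<Prod>i\<in>I. F i (\<omega> i)) \<partial>PiM I (\<lambda>_. P)) = (\<Prod>i\<in>I. integral\<^sup>L P (F i))"
proof -
  interpret prob_space P by fact
  interpret product_sigma_finite "\<lambda>_. P"
    by (simp add: product_sigma_finite_def sigma_finite_measure_axioms)
  show "integrable (PiM I (\<lambda>_. P)) (\<lambda>\<omega>. \<Prod>i\<in>I. F i (\<omega> i))"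
    using product_integrable_prod[OF fin F] by simp
  show "(\<integral>\<omega>. (\<Prod>i\<in>I. F i (\<omega> i)) \<partial>PiM I (\<lambda>_. P)) = (\<Prod>i\<in>I. integral\<^sup>L P (F i))"
    using product_integral_prod[OF fin F] by simp
qed

lemma integral_PiM_component:
  assumes P: "prob_space P" and fin: "finite I" and i: "i \<in> I" and f: "integrable P (f :: _ \<Rightarrow> real)"
  shows "integrable (PiM I (\<lambda>_. P)) (\<lambda>\<omega>. f (\<omega> i))"
    and "(\<integral>\<omega>. f (\<omega> i) \<partial>PiM I (\<lambda>_. P)) = integral\<^sup>L P f"
proof -
  interpret prob_space P by fact
  define F where "F k z = (if k = i then f z else 1)" for k z
  have Fk: "F k = (if k = i then f else (\<lambda>_. 1))" for k by (simp add: F_def fun_eq_iff)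
  have F: "k \<in> I \<Longrightarrow> integrable P (F k)" for k using f by (simp add: Fk)
  have eq: "(\<Prod>k\<in>I. F k (\<omega> k)) = f (\<omega> i)" for \<omega>
    unfolding F_def using fin i by (simp add: prod.delta)
  have "(\<Prod>k\<in>I. integral\<^sup>L P (F k)) = (\<Prod>k\<in>I. if k = i then integral\<^sup>L P f else 1)"
    by (intro prod.cong) (auto simp: Fk prob_space)
  hence eq2: "(\<Prod>k\<in>I. integral\<^sup>L P (F k)) = integral\<^sup>L P f" using fin i by (simp add: prod.delta)
  have A: "integrable (PiM I (\<lambda>_. P)) (\<lambda>\<omega>. \<Prod>k\<in>I. F k (\<omega> k))"
    by (rule integral_PiM_prod(1)[OF P fin]) (rule F)
  have B: "(\<integral>\<omega>. (\<Prod>k\<in>I. F k (\<omega> k)) \<partial>PiM I (\<lambda>_. P)) = (\<Prod>k\<in>I. integral\<^sup>L P (F k))"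
    by (rule integral_PiM_prod(2)[OF P fin]) (rule F)
  show "integrable (PiM I (\<lambda>_. P)) (\<lambda>\<omega>. f (\<omega> i))" using A eq by simp
  show "(\<integral>\<omega>. f (\<omega> i) \<partial>PiM I (\<lambda>_. P)) = integral\<^sup>L P f" using B eq eq2 by simp
qed

lemma integral_PiM_two_components:
  assumes P: "prob_space P" and fin: "finite I" and i: "i \<in> I" and j: "j \<in> I" and ij: "i \<noteq> j"
    and f: "integrable P (f :: _ \<Rightarrow> real)" and g: "integrable P (g :: _ \<Rightarrow> real)"
  shows "integrable (PiM I (\<lambda>_. P)) (\<lambda>\<omega>. f (\<omega> i) * g (\<omega> j))"
    and "(\<integral>\<omega>. f (\<omega> i) * g (\<omega> j) \<partial>PiM I (\<lambda>_. P)) = integral\<^sup>L P f * integral\<^sup>L P g"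
proof -
  interpret prob_space P by fact
  define F where "F k z = (if k = i then f z else if k = j then g z else 1)" for k z
  have Fk: "F k = (if k = i then f else if k = j then g else (\<lambda>_. 1))" for k
    by (simp add: F_def fun_eq_iff)
  have F: "k \<in> I \<Longrightarrow> integrable P (F k)" for k using f g by (simp add: Fk)
  have two: "(\<Prod>k\<in>I. h k) = h i * h j"
    if "\<And>k. k \<in> I \<Longrightarrow> k \<noteq> i \<Longrightarrow> k \<noteq> j \<Longrightarrow> h k = 1" for h :: "_ \<Rightarrow> real"
  proof -
    have "(\<Prod>k\<in>I. h k) = h i * (\<Prod>k\<in>I - {i}. h k)" using fin i by (rule prod.remove)
    also have "(\<Prod>k\<in>I - {i}. h k) = h j * (\<Prod>k\<in>I - {i} - {j}. h k)"
      using fin j ij by (intro prod.remove) auto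
    also have "(\<Prod>k\<in>I - {i} - {j}. h k) = 1" using that by (intro prod.neutral) auto
    finally show ?thesis by simp
  qed
  have eq: "(\<Prod>k\<in>I. F k (\<omega> k)) = f (\<omega> i) * g (\<omega> j)" for \<omega>
    using two[of "\<lambda>k. F k (\<omega> k)"] ij by (simp add: F_def)
  have eq2: "(\<Prod>k\<in>I. integral\<^sup>L P (F k)) = integral\<^sup>L P f * integral\<^sup>L P g"
    using two[of "\<lambda>k. integral\<^sup>L P (F k)"] ij by (simp add: Fk prob_space)
  have A: "integrable (PiM I (\<lambda>_. P)) (\<lambda>\<omega>. \<Prod>k\<in>I. F k (\<omega> k))"
    by (rule integral_PiM_prod(1)[OF P fin]) (rule F)
  have B: "(\<integral>\<omega>. (\<Prod>k\<in>I. F k (\<omega> k)) \<partial>PiM I (\<lambda>_. P)) = (\<Prod>k\<in>I. integral\<^sup>L P (F k))"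
    by (rule integral_PiM_prod(2)[OF P fin]) (rule F)
  show "integrable (PiM I (\<lambda>_. P)) (\<lambda>\<omega>. f (\<omega> i) * g (\<omega> j))" using A eq by simp
  show "(\<integral>\<omega>. f (\<omega> i) * g (\<omega> j) \<partial>PiM I (\<lambda>_. P)) = integral\<^sup>L P f * integral\<^sup>L P g"
    using B eq eq2 by simp
qed

lemma integral_PiM_product_of_components:
  assumes P: "prob_space P" and fin: "finite I" and i: "i \<in> I" and j: "j \<in> I"
    and f: "integrable P (f :: _ \<Rightarrow> real)" and g: "integrable P (g :: _ \<Rightarrow> real)"
    and fg: "integrable P (\<lambda>z. f z * g z)"
  shows "integrable (PiM I (\<lambda>_. P)) (\<lambda>\<omega>. f (\<omega> i) * g (\<omega> j))"
    and "(\<integral>\<omega>. f (\<omega> i) * g (\<omega> j) \<partial>PiM I (\<lambda>_. P))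
         = (if i = j then (\<integral>z. f z * g z \<partial>P) else integral\<^sup>L P f * integral\<^sup>L P g)"
  using integral_PiM_component[OF P fin i fg] integral_PiM_two_components[OF P fin i j _ f g]
  by (cases "i = j"; simp)+

lemma sum_sum_if_eq:
  "(\<Sum>i<n. \<Sum>j<n. if i = j then (x::real) else y) = real n * x + (real n * real n - real n) * y"
proof -
  have "(\<Sum>j<n. if i = j then x else y) = real n * y + (x - y)" if "i < n" for i
  proof -
    have "(\<Sum>j<n. if i = j then x else y) = (\<Sum>j<n. y + (if i = j then x - y else 0))"
      by (intro sum.cong) auto
    also have "\<dots> = real n * y + (x - y)" using that by (simp add: sum.distrib)
    finally show ?thesis .
  qed
  hence "(\<Sum>i<n. \<Sum>j<n. if i = j then x else y) = (\<Sum>i<n. real n * y + (x - y))" by simp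
  also have "\<dots> = real n * x + (real n * real n - real n) * y" by (simp add: algebra_simps)
  finally show ?thesis .
qed

lemma integral_quadruple_sum:
  fixes f :: "_ \<Rightarrow> _ \<Rightarrow> _ \<Rightarrow> _ \<Rightarrow> _ \<Rightarrow> real"
  assumes f: "\<And>a b i j. a \<in> A \<Longrightarrow> b \<in> B \<Longrightarrow> i \<in> I \<Longrightarrow> j \<in> J \<Longrightarrow> integrable M (f a b i j)"
  shows "integral\<^sup>L M (\<lambda>\<omega>. \<Sum>a\<in>A. \<Sum>b\<in>B. \<Sum>i\<in>I. \<Sum>j\<in>J. f a b i j \<omega>)
       = (\<Sum>a\<in>A. \<Sum>b\<in>B. \<Sum>i\<in>I. \<Sum>j\<in>J. integral\<^sup>L M (f a b i j))"
proof -
  have 1: "integrable M (\<lambda>\<omega>. \<Sum>j\<in>J. f a b i j \<omega>)" if "a \<in> A" "b \<in> B" "i \<in> I" for a b i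
    using that by (auto intro!: Bochner_Integration.integrable_sum f)
  have 2: "integrable M (\<lambda>\<omega>. \<Sum>i\<in>I. \<Sum>j\<in>J. f a b i j \<omega>)" if "a \<in> A" "b \<in> B" for a b
    by (rule Bochner_Integration.integrable_sum, rule 1) (use that in auto)
  have 3: "integrable M (\<lambda>\<omega>. \<Sum>b\<in>B. \<Sum>i\<in>I. \<Sum>j\<in>J. f a b i j \<omega>)" if "a \<in> A" for a
    by (rule Bochner_Integration.integrable_sum, rule 2) (use that in auto)
  have "integral\<^sup>L M (\<lambda>\<omega>. \<Sum>a\<in>A. \<Sum>b\<in>B. \<Sum>i\<in>I. \<Sum>j\<in>J. f a b i j \<omega>)
      = (\<Sum>a\<in>A. integral\<^sup>L M (\<lambda>\<omega>. \<Sum>b\<in>B. \<Sum>i\<in>I. \<Sum>j\<in>J. f a b i j \<omega>))"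
    by (rule Bochner_Integration.integral_sum) (rule 3)
  also have "\<dots> = (\<Sum>a\<in>A. \<Sum>b\<in>B. integral\<^sup>L M (\<lambda>\<omega>. \<Sum>i\<in>I. \<Sum>j\<in>J. f a b i j \<omega>))"
    by (intro sum.cong refl Bochner_Integration.integral_sum 2)
  also have "\<dots> = (\<Sum>a\<in>A. \<Sum>b\<in>B. \<Sum>i\<in>I. integral\<^sup>L M (\<lambda>\<omega>. \<Sum>j\<in>J. f a b i j \<omega>))"
    by (intro sum.cong refl Bochner_Integration.integral_sum 1)
  also have "\<dots> = (\<Sum>a\<in>A. \<Sum>b\<in>B. \<Sum>i\<in>I. \<Sum>j\<in>J. integral\<^sup>L M (f a b i j))"
    by (intro sum.cong refl Bochner_Integration.integral_sum) (auto intro: f)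
  finally show ?thesis .
qed

text \<open>Expanding \<open>qform T (1/n \<Sum>\<^sub>i G\<^sub>i)\<close> into the \<open>n\<^sup>2\<close> products \<open>G\<^sub>i\<^sub>a G\<^sub>j\<^sub>b\<close>: the \<open>n\<close> diagonal terms
  have the second moment as expectation and the \<open>n\<^sup>2 - n\<close> off-diagonal terms the product of means.\<close>
lemma integral_qform_sample_mean:
  fixes T :: "real^'d^'d" and G :: "'a \<Rightarrow> real^'d"
  assumes P: "prob_space P" and n: "n \<ge> 1"
    and int1: "\<And>a. integrable P (\<lambda>z. G z $ a)"
    and int2: "\<And>a b. integrable P (\<lambda>z. G z $ a * G z $ b)"
  defines "m a \<equiv> integral\<^sup>L P (\<lambda>z. G z $ a)"
  shows "integrable (PiM {..<n} (\<lambda>_. P)) (\<lambda>\<omega>. qform T ((1 / real n) *\<^sub>R (\<Sum>i<n. G (\<omega> i))))"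
    and "(\<integral>\<omega>. qform T ((1 / real n) *\<^sub>R (\<Sum>i<n. G (\<omega> i))) \<partial>PiM {..<n} (\<lambda>_. P)) =
         (\<Sum>a\<in>UNIV. \<Sum>b\<in>UNIV. T $ a $ b * (m a * m b))
         + (1 / real n) * (\<Sum>a\<in>UNIV. \<Sum>b\<in>UNIV. T $ a $ b * (integral\<^sup>L P (\<lambda>z. G z $ a * G z $ b) - m a * m b))"
proof -
  define Pi where "Pi = PiM {..<n} (\<lambda>_. P)"
  define X where "X a b (i::nat) (j::nat) (\<omega>::nat \<Rightarrow> 'a) = G (\<omega> i) $ a * G (\<omega> j) $ b" for a b i j \<omega>
  have Xeq: "X a b i j = (\<lambda>\<omega>. G (\<omega> i) $ a * G (\<omega> j) $ b)" for a b i j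
    by (simp add: X_def fun_eq_iff)
  have intX: "integrable Pi (X a b i j)"
    and EX: "integral\<^sup>L Pi (X a b i j)
      = (if i = j then integral\<^sup>L P (\<lambda>z. G z $ a * G z $ b) else m a * m b)"
    if "i < n" "j < n" for a b i j
    using integral_PiM_product_of_components[OF P _ _ _ int1[of a] int1[of b] int2[of a b], of "{..<n}" i j]
      that by (simp_all add: Xeq Pi_def m_def)
  have feq: "qform T ((1 / real n) *\<^sub>R (\<Sum>i<n. G (\<omega> i))) =
      (\<Sum>a\<in>UNIV. \<Sum>b\<in>UNIV. \<Sum>i<n. \<Sum>j<n. (T $ a $ b / (real n * real n)) * X a b i j \<omega>)" for \<omega>
  proof -
    have "qform T ((1 / real n) *\<^sub>R (\<Sum>i<n. G (\<omega> i))) =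
      (\<Sum>a\<in>UNIV. \<Sum>b\<in>UNIV. \<Sum>i<n. \<Sum>j<n. (T $ a $ b / (real n * real n)) * X a b j i \<omega>)"
      unfolding qform_eq_sum_entries X_def
      by (simp add: sum_component sum_distrib_left sum_distrib_right mult_ac)
    also have "\<dots> = (\<Sum>a\<in>UNIV. \<Sum>b\<in>UNIV. \<Sum>i<n. \<Sum>j<n. (T $ a $ b / (real n * real n)) * X a b i j \<omega>)"
      by (rule sum.cong[OF refl], rule sum.cong[OF refl], rule sum.swap)
    finally show ?thesis .
  qed
  have intT: "integrable Pi (\<lambda>\<omega>. (T $ a $ b / (real n * real n)) * X a b i j \<omega>)"
    if "i \<in> {..<n}" "j \<in> {..<n}" for a b i j
    using intX[of i j a b] that by simp
  show "integrable (PiM {..<n} (\<lambda>_. P)) (\<lambda>\<omega>. qform T ((1 / real n) *\<^sub>R (\<Sum>i<n. G (\<omega> i))))"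
    unfolding feq Pi_def[symmetric] by (intro Bochner_Integration.integrable_sum intT)
  have "(\<integral>\<omega>. qform T ((1 / real n) *\<^sub>R (\<Sum>i<n. G (\<omega> i))) \<partial>Pi) =
     (\<Sum>a\<in>UNIV. \<Sum>b\<in>UNIV. \<Sum>i<n. \<Sum>j<n. (T $ a $ b / (real n * real n)) * integral\<^sup>L Pi (X a b i j))"
    unfolding feq by (simp only: integral_quadruple_sum intT Bochner_Integration.integral_mult_right_zero)
  also have "\<dots> = (\<Sum>a\<in>UNIV. \<Sum>b\<in>UNIV. (T $ a $ b / (real n * real n)) *
        (\<Sum>i<n. \<Sum>j<n. if i = j then integral\<^sup>L P (\<lambda>z. G z $ a * G z $ b) else m a * m b))"
    by (simp add: EX sum_distrib_left)
  also have "\<dots> = (\<Sum>a\<in>UNIV. \<Sum>b\<in>UNIV. T $ a $ b * (m a * m b)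
        + (1 / real n) * (T $ a $ b * (integral\<^sup>L P (\<lambda>z. G z $ a * G z $ b) - m a * m b)))"
    using n by (intro sum.cong refl) (simp add: sum_sum_if_eq field_simps)
  also have "\<dots> = (\<Sum>a\<in>UNIV. \<Sum>b\<in>UNIV. T $ a $ b * (m a * m b))
         + (1 / real n) * (\<Sum>a\<in>UNIV. \<Sum>b\<in>UNIV. T $ a $ b * (integral\<^sup>L P (\<lambda>z. G z $ a * G z $ b) - m a * m b))"
    by (simp add: sum.distrib sum_distrib_left)
  finally show "(\<integral>\<omega>. qform T ((1 / real n) *\<^sub>R (\<Sum>i<n. G (\<omega> i))) \<partial>PiM {..<n} (\<lambda>_. P)) =
         (\<Sum>a\<in>UNIV. \<Sum>b\<in>UNIV. T $ a $ b * (m a * m b))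
         + (1 / real n) * (\<Sum>a\<in>UNIV. \<Sum>b\<in>UNIV. T $ a $ b * (integral\<^sup>L P (\<lambda>z. G z $ a * G z $ b) - m a * m b))"
    unfolding Pi_def .
qed

lemma covariance_shift:
  fixes f g :: "'a \<Rightarrow> real"
  assumes P: "prob_space P" and f: "integrable P f" and g: "integrable P g"
    and fg: "integrable P (\<lambda>z. f z * g z)"
  shows "integrable P (\<lambda>z. (f z - a) * (g z - b))"
    and "(\<integral>z. (f z - a) * (g z - b) \<partial>P) - (\<integral>z. f z - a \<partial>P) * (\<integral>z. g z - b \<partial>P)
       = (\<integral>z. f z * g z \<partial>P) - integral\<^sup>L P f * integral\<^sup>L P g"
proof -
  interpret prob_space P by fact
  have eq: "(\<lambda>z. (f z - a) * (g z - b)) = (\<lambda>z. f z * g z + (- b) * f z + (- a) * g z + a * b)"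
    by (rule ext) (simp add: algebra_simps)
  show "integrable P (\<lambda>z. (f z - a) * (g z - b))"
    unfolding eq using f g fg by simp
  show "(\<integral>z. (f z - a) * (g z - b) \<partial>P) - (\<integral>z. f z - a \<partial>P) * (\<integral>z. g z - b \<partial>P)
       = (\<integral>z. f z * g z \<partial>P) - integral\<^sup>L P f * integral\<^sup>L P g"
    unfolding eq using f g fg by (simp add: prob_space algebra_simps)
qed

lemma qform_covariance_eq:
  assumes "\<And>a b. integrable P (\<lambda>z. H z $ a * H z $ b)"
  shows "(\<Sum>a\<in>UNIV. \<Sum>b\<in>UNIV. T $ a $ b * ((\<integral>z. H z $ a * H z $ b \<partial>P) - \<mu> $ a * \<mu> $ b))
       = (\<integral>z. qform T (H z) \<partial>P) - qform T \<mu>"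
proof -
  have "(\<integral>z. qform T (H z) \<partial>P) = (\<Sum>a\<in>UNIV. \<Sum>b\<in>UNIV. (\<integral>z. T $ a $ b * (H z $ a * H z $ b) \<partial>P))"
    unfolding qform_eq_sum_entries using assms
    by (simp add: Bochner_Integration.integral_sum Bochner_Integration.integrable_sum)
  thus ?thesis by (simp add: qform_eq_sum_entries right_diff_distrib sum_subtractf)
qed

lemma integral_qform_sample_mean_error:
  fixes T :: "real^'d^'d" and H :: "'a \<Rightarrow> real^'d"
  assumes P: "prob_space P" and n: "n \<ge> 1"
    and int1: "\<And>a. integrable P (\<lambda>z. H z $ a)"
    and int2: "\<And>a b. integrable P (\<lambda>z. H z $ a * H z $ b)"
  defines "\<mu> \<equiv> \<chi> a. \<integral>z. H z $ a \<partial>P"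
  shows "integrable (PiM {..<n} (\<lambda>_. P)) (\<lambda>\<omega>. qform T ((1 / real n) *\<^sub>R (\<Sum>i<n. H (\<omega> i)) - c))"
    and "(\<integral>\<omega>. qform T ((1 / real n) *\<^sub>R (\<Sum>i<n. H (\<omega> i)) - c) \<partial>PiM {..<n} (\<lambda>_. P))
       = qform T (\<mu> - c) + (1 / real n) * ((\<integral>z. qform T (H z) \<partial>P) - qform T \<mu>)"
proof -
  interpret prob_space P by fact
  define G where "G z = H z - c" for z
  have mean: "(1 / real n) *\<^sub>R (\<Sum>i<n. H (\<omega> i)) - c = (1 / real n) *\<^sub>R (\<Sum>i<n. G (\<omega> i))" for \<omega>
    using n by (simp add: G_def sum_subtractf scaleR_diff_right sum_constant_scaleR del: sum_constant)
  have G: "G z $ a = H z $ a - c $ a" for z a by (simp add: G_def)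
  have iG: "integrable P (\<lambda>z. G z $ a)" for a unfolding G using int1 by simp
  have iGG: "integrable P (\<lambda>z. G z $ a * G z $ b)" for a b
    unfolding G by (rule covariance_shift(1)[OF P int1[of a] int1[of b] int2[of a b]])
  have mG: "(\<integral>z. G z $ a \<partial>P) = (\<mu> - c) $ a" for a
    unfolding G \<mu>_def using int1 by (simp add: prob_space)
  have cov: "(\<integral>z. G z $ a * G z $ b \<partial>P) - (\<mu> - c) $ a * (\<mu> - c) $ b
      = (\<integral>z. H z $ a * H z $ b \<partial>P) - \<mu> $ a * \<mu> $ b" for a b
    using covariance_shift(2)[OF P int1[of a] int1[of b] int2[of a b], of "c $ a" "c $ b"] mG
    unfolding G \<mu>_def by simp
  note Q = integral_qform_sample_mean[OF P n iG iGG, of T]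
  show "integrable (PiM {..<n} (\<lambda>_. P)) (\<lambda>\<omega>. qform T ((1 / real n) *\<^sub>R (\<Sum>i<n. H (\<omega> i)) - c))"
    unfolding mean by (rule Q(1))
  have "(\<integral>\<omega>. qform T ((1 / real n) *\<^sub>R (\<Sum>i<n. H (\<omega> i)) - c) \<partial>PiM {..<n} (\<lambda>_. P))
      = qform T (\<mu> - c)
        + (1 / real n) * (\<Sum>a\<in>UNIV. \<Sum>b\<in>UNIV. T $ a $ b * ((\<integral>z. H z $ a * H z $ b \<partial>P) - \<mu> $ a * \<mu> $ b))"
    unfolding mean Q(2) mG cov by (simp add: qform_eq_sum_entries)
  also have "\<dots> = qform T (\<mu> - c) + (1 / real n) * ((\<integral>z. qform T (H z) \<partial>P) - qform T \<mu>)"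
    by (simp only: qform_covariance_eq[OF int2])
  finally show "(\<integral>\<omega>. qform T ((1 / real n) *\<^sub>R (\<Sum>i<n. H (\<omega> i)) - c) \<partial>PiM {..<n} (\<lambda>_. P))
       = qform T (\<mu> - c) + (1 / real n) * ((\<integral>z. qform T (H z) \<partial>P) - qform T \<mu>)" .
qed

section \<open>Moment bounds for the class\<close>

lemma in_class_prob_space:
  assumes "in_class \<sigma> \<psi> M S T P Q w"
  shows "prob_space P" and "sets P = sets borel" and "integrable P (\<lambda>z. norm z ^ 4)"
  using assms by (auto simp: in_class_def is_distr_def)

lemma in_class_integrable:
  fixes f :: "(real^'d) \<times> real \<Rightarrow> real"
  assumes C: "in_class \<sigma> \<psi> M S T P Q w"
    and f: "poly_bounded k f" and k: "k \<le> 4" and cont: "continuous_on UNIV f"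
  shows "integrable P f"
  by (rule integrable_poly_bounded[OF in_class_prob_space(1,3)[OF C] f k
        measurable_continuous_on_borel_sets[OF in_class_prob_space(2)[OF C] cont]])

lemma poly_bounded_residual: "poly_bounded 1 (\<lambda>z::(real^'d) \<times> real. snd z - fst z \<bullet> w)"
  by (rule poly_bounded_diff[OF poly_bounded_snd poly_bounded_fst_inner])

lemma in_class_second_moment:
  fixes S :: "real^'d^'d"
  assumes C: "in_class \<sigma> \<psi> M S T P Q w"
  shows "S $ k $ l = (\<integral>z. fst z $ k * fst z $ l \<partial>P)"
proof -
  have "integrable P (\<lambda>z. fst z $ i * fst z $ j)" for i j
    by (rule in_class_integrable[OF C poly_bounded_mult[OF poly_bounded_fst_nth poly_bounded_fst_nth]])
      (simp, intro continuous_intros)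
  hence "integrable P (\<lambda>z. outer (fst z) (fst z))"
    by (intro integrable_matrix_entries) (simp add: outer_def)
  moreover have "S = (\<integral>z. outer (fst z) (fst z) \<partial>P)" using C by (simp add: in_class_def)
  ultimately show ?thesis by (simp add: integral_matrix_entry(1) outer_def)
qed

text \<open>The first-order condition for \<open>w\<^sup>*\<close> minimising the source risk along the coordinate
  direction \<open>e\<^sub>k\<close>.\<close>
lemma in_class_normal_equation:
  fixes S :: "real^'d^'d"
  assumes C: "in_class \<sigma> \<psi> M S T P Q w"
  shows "(\<integral>z. (snd z - fst z \<bullet> w) * fst z $ k \<partial>P) = 0"
proof -
  define e where "e z = snd z - fst z \<bullet> w" for z :: "(real^'d) \<times> real"
  have i1: "integrable P (\<lambda>z. e z * e z)"
    unfolding e_def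
    by (rule in_class_integrable[OF C poly_bounded_mult[OF poly_bounded_residual poly_bounded_residual]])
      (simp, intro continuous_intros)
  have i2: "integrable P (\<lambda>z. e z * fst z $ k)"
    unfolding e_def
    by (rule in_class_integrable[OF C poly_bounded_mult[OF poly_bounded_residual poly_bounded_fst_nth]])
      (simp, intro continuous_intros)
  have i3: "integrable P (\<lambda>z. fst z $ k * fst z $ k)"
    by (rule in_class_integrable[OF C poly_bounded_mult[OF poly_bounded_fst_nth poly_bounded_fst_nth]])
      (simp, intro continuous_intros)
  have "0 \<le> 2 * t * (- (\<integral>z. e z * fst z $ k \<partial>P)) + t^2 * (\<integral>z. fst z $ k * fst z $ k \<partial>P)" for t
  proof -
    have "risk P w \<le> risk P (w + t *\<^sub>R axis k 1)" using C by (simp add: in_class_def)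
    moreover have "(\<lambda>z. (snd z - fst z \<bullet> (w + t *\<^sub>R axis k 1))^2) =
        (\<lambda>z. e z * e z + (- 2 * t) * (e z * fst z $ k) + t^2 * (fst z $ k * fst z $ k))"
      by (rule ext) (simp add: e_def inner_add_right inner_axis power2_eq_square algebra_simps)
    moreover have "(\<lambda>z. (snd z - fst z \<bullet> w)^2) = (\<lambda>z. e z * e z)"
      by (rule ext) (simp add: e_def power2_eq_square)
    ultimately have "(\<integral>z. e z * e z \<partial>P)
        \<le> (\<integral>z. e z * e z + (- 2 * t) * (e z * fst z $ k) + t^2 * (fst z $ k * fst z $ k) \<partial>P)"
      by (simp add: risk_def)
    also have "\<dots> = (\<integral>z. e z * e z \<partial>P) + (- 2 * t) * (\<integral>z. e z * fst z $ k \<partial>P)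
        + t^2 * (\<integral>z. fst z $ k * fst z $ k \<partial>P)"
      using i1 i2 i3 by (simp add: Bochner_Integration.integral_add)
    finally show ?thesis by (simp add: algebra_simps)
  qed
  from linear_coeff_zero_if_quadratic_nonneg[OF this] show ?thesis unfolding e_def by simp
qed

lemma in_class_cross_moment:
  fixes S :: "real^'d^'d"
  assumes C: "in_class \<sigma> \<psi> M S T P Q w"
  shows "(\<integral>z. snd z * fst z $ k \<partial>P) = (S *v w) $ k"
proof -
  have i1: "integrable P (\<lambda>z. (snd z - fst z \<bullet> w) * fst z $ k)"
    by (rule in_class_integrable[OF C poly_bounded_mult[OF poly_bounded_residual poly_bounded_fst_nth]])
      (simp, intro continuous_intros)
  have i2: "integrable P (\<lambda>z. w $ l * (fst z $ k * fst z $ l))" for l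
    by (intro integrable_mult_right in_class_integrable[OF C
          poly_bounded_mult[OF poly_bounded_fst_nth poly_bounded_fst_nth]])
      (simp, intro continuous_intros)
  have "(\<lambda>z. snd z * fst z $ k)
      = (\<lambda>z. (snd z - fst z \<bullet> w) * fst z $ k + (\<Sum>l\<in>UNIV. w $ l * (fst z $ k * fst z $ l)))"
    by (rule ext) (simp add: inner_vec_def algebra_simps sum_distrib_left)
  hence "(\<integral>z. snd z * fst z $ k \<partial>P) = (\<integral>z. (snd z - fst z \<bullet> w) * fst z $ k \<partial>P)
      + (\<Sum>l\<in>UNIV. \<integral>z. w $ l * (fst z $ k * fst z $ l) \<partial>P)"
    using i1 i2 by (simp add: Bochner_Integration.integral_add Bochner_Integration.integral_sum
        Bochner_Integration.integrable_sum)
  also have "\<dots> = (\<Sum>l\<in>UNIV. S $ k $ l * w $ l)"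
    using in_class_normal_equation[OF C, of k] by (simp add: in_class_second_moment[OF C] mult.commute)
  finally show ?thesis by (simp add: matrix_vector_mult_def)
qed

lemma integral_weighted_square_le:
  fixes g :: "(real^'d) \<times> real \<Rightarrow> real"
  assumes int: "\<And>i j. integrable P (\<lambda>z. (g z * fst z $ i) * (g z * fst z $ j))"
    and L: "loewner_le (\<integral>z. (g z)^2 *\<^sub>R outer (fst z) (fst z) \<partial>P) B"
  shows "(\<integral>z. (g z)^2 * (u \<bullet> fst z)^2 \<partial>P) \<le> qform B u"
proof -
  have "integrable P (\<lambda>z. (g z)^2 *\<^sub>R outer (fst z) (fst z))"
  proof (rule integrable_matrix_entries)
    fix i j
    have "(\<lambda>z. ((g z)^2 *\<^sub>R outer (fst z) (fst z)) $ i $ j) = (\<lambda>z. (g z * fst z $ i) * (g z * fst z $ j))"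
      by (rule ext) (simp add: outer_def power2_eq_square mult_ac)
    thus "integrable P (\<lambda>z. ((g z)^2 *\<^sub>R outer (fst z) (fst z)) $ i $ j)" using int by simp
  qed
  hence "(\<integral>z. (g z)^2 * (u \<bullet> fst z)^2 \<partial>P) = qform (\<integral>z. (g z)^2 *\<^sub>R outer (fst z) (fst z) \<partial>P) u"
    by (simp add: qform_integral qform_scaleR_outer)
  also have "\<dots> \<le> qform B u" using L by (simp add: loewner_le_def qform_def)
  finally show ?thesis .
qed

lemma in_class_noise_bound:
  fixes S :: "real^'d^'d"
  assumes C: "in_class \<sigma> \<psi> M S T P Q w"
  shows "(\<integral>z. (snd z - fst z \<bullet> w)^2 * (u \<bullet> fst z)^2 \<partial>P) \<le> \<sigma>^2 * qform S u"
proof -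
  have "(\<integral>z. (snd z - fst z \<bullet> w)^2 * (u \<bullet> fst z)^2 \<partial>P) \<le> qform (\<sigma>^2 *\<^sub>R S) u"
  proof (rule integral_weighted_square_le)
    show "integrable P (\<lambda>z. ((snd z - fst z \<bullet> w) * fst z $ i) * ((snd z - fst z \<bullet> w) * fst z $ j))"
      for i j
      by (rule in_class_integrable[OF C poly_bounded_mult[OF
            poly_bounded_mult[OF poly_bounded_residual poly_bounded_fst_nth]
            poly_bounded_mult[OF poly_bounded_residual poly_bounded_fst_nth]]])
        (simp, intro continuous_intros)
    show "loewner_le (\<integral>z. (snd z - fst z \<bullet> w)^2 *\<^sub>R outer (fst z) (fst z) \<partial>P) (\<sigma>^2 *\<^sub>R S)"
      using C by (simp add: in_class_def)
  qed
  thus ?thesis by (simp add: qform_def scaleR_matrix_vector_assoc[symmetric])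
qed

text \<open>The fourth-moment condition tested with the rank-one matrix \<open>w w\<^sup>T\<close>.\<close>
lemma in_class_fourth_moment_bound:
  fixes S :: "real^'d^'d"
  assumes C: "in_class \<sigma> \<psi> M S T P Q w"
  shows "(\<integral>z. (fst z \<bullet> w)^2 * (u \<bullet> fst z)^2 \<partial>P) \<le> \<psi> * (w \<bullet> (S *v w)) * qform S u"
proof -
  have "(\<integral>z. (fst z \<bullet> w)^2 * (u \<bullet> fst z)^2 \<partial>P) \<le> qform ((\<psi> * (w \<bullet> (S *v w))) *\<^sub>R S) u"
  proof (rule integral_weighted_square_le)
    show "integrable P (\<lambda>z. ((fst z \<bullet> w) * fst z $ i) * ((fst z \<bullet> w) * fst z $ j))" for i j
      by (rule in_class_integrable[OF C poly_bounded_mult[OF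
            poly_bounded_mult[OF poly_bounded_fst_inner poly_bounded_fst_nth]
            poly_bounded_mult[OF poly_bounded_fst_inner poly_bounded_fst_nth]]])
        (simp, intro continuous_intros)
    have "loewner_le (\<integral>z. outer (fst z) (fst z) ** outer w w ** outer (fst z) (fst z) \<partial>P)
                     ((\<psi> * trace (S ** outer w w)) *\<^sub>R S)"
      using C psd_outer_self[of w] by (simp add: in_class_def)
    thus "loewner_le (\<integral>z. (fst z \<bullet> w)^2 *\<^sub>R outer (fst z) (fst z) \<partial>P) ((\<psi> * (w \<bullet> (S *v w))) *\<^sub>R S)"
      by (simp add: outer_sandwich trace_mult_outer)
  qed
  thus ?thesis by (simp add: qform_def scaleR_matrix_vector_assoc[symmetric])
qed

text \<open>Splitting \<open>y = \<epsilon> + \<langle>x, w\<^sup>*\<rangle>\<close> gives \<open>y\<^sup>2 \<le> 2\<epsilon>\<^sup>2 + 2\<langle>x, w\<^sup>*\<rangle>\<^sup>2\<close>.\<close>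
lemma in_class_response_rank_one_bound:
  fixes S :: "real^'d^'d"
  assumes C: "in_class \<sigma> \<psi> M S T P Q w"
  shows "integrable P (\<lambda>z. (snd z)^2 * (v \<bullet> fst z)^2)"
    and "(\<integral>z. (snd z)^2 * (v \<bullet> fst z)^2 \<partial>P) \<le> (2 * \<sigma>^2 + 2 * \<psi> * (w \<bullet> (S *v w))) * qform S v"
proof -
  have int_noise: "integrable P (\<lambda>z. (snd z - fst z \<bullet> w)^2 * (v \<bullet> fst z)^2)"
    unfolding power2_eq_square
    by (rule in_class_integrable[OF C poly_bounded_mult[OF
          poly_bounded_mult[OF poly_bounded_residual poly_bounded_residual]
          poly_bounded_mult[OF poly_bounded_inner_fst poly_bounded_inner_fst]]])
      (simp, intro continuous_intros)
  have int_signal: "integrable P (\<lambda>z. (fst z \<bullet> w)^2 * (v \<bullet> fst z)^2)"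
    unfolding power2_eq_square
    by (rule in_class_integrable[OF C poly_bounded_mult[OF
          poly_bounded_mult[OF poly_bounded_fst_inner poly_bounded_fst_inner]
          poly_bounded_mult[OF poly_bounded_inner_fst poly_bounded_inner_fst]]])
      (simp, intro continuous_intros)
  show int_response: "integrable P (\<lambda>z. (snd z)^2 * (v \<bullet> fst z)^2)"
    unfolding power2_eq_square
    by (rule in_class_integrable[OF C poly_bounded_mult[OF
          poly_bounded_mult[OF poly_bounded_snd poly_bounded_snd]
          poly_bounded_mult[OF poly_bounded_inner_fst poly_bounded_inner_fst]]])
      (simp, intro continuous_intros)
  have "(\<integral>z. (snd z)^2 * (v \<bullet> fst z)^2 \<partial>P) \<le>
        (\<integral>z. 2 * ((snd z - fst z \<bullet> w)^2 * (v \<bullet> fst z)^2) + 2 * ((fst z \<bullet> w)^2 * (v \<bullet> fst z)^2) \<partial>P)"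
  proof (rule integral_mono[OF int_response])
    show "integrable P (\<lambda>z. 2 * ((snd z - fst z \<bullet> w)^2 * (v \<bullet> fst z)^2)
        + 2 * ((fst z \<bullet> w)^2 * (v \<bullet> fst z)^2))"
      using int_noise int_signal by simp
    fix z
    have "(snd z)^2 \<le> 2 * (snd z - fst z \<bullet> w)^2 + 2 * (fst z \<bullet> w)^2"
      using zero_le_power2[of "snd z - 2 * (fst z \<bullet> w)"] by (simp add: power2_eq_square algebra_simps)
    hence "(snd z)^2 * (v \<bullet> fst z)^2 \<le> (2 * (snd z - fst z \<bullet> w)^2 + 2 * (fst z \<bullet> w)^2) * (v \<bullet> fst z)^2"
      by (intro mult_right_mono) auto
    thus "(snd z)^2 * (v \<bullet> fst z)^2
        \<le> 2 * ((snd z - fst z \<bullet> w)^2 * (v \<bullet> fst z)^2) + 2 * ((fst z \<bullet> w)^2 * (v \<bullet> fst z)^2)"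
      by (simp add: algebra_simps)
  qed
  also have "\<dots> = 2 * (\<integral>z. (snd z - fst z \<bullet> w)^2 * (v \<bullet> fst z)^2 \<partial>P)
      + 2 * (\<integral>z. (fst z \<bullet> w)^2 * (v \<bullet> fst z)^2 \<partial>P)"
    using int_noise int_signal by simp
  also have "\<dots> \<le> 2 * (\<sigma>^2 * qform S v) + 2 * (\<psi> * (w \<bullet> (S *v w)) * qform S v)"
    using in_class_noise_bound[OF C, of v] in_class_fourth_moment_bound[OF C, of v] by linarith
  finally show "(\<integral>z. (snd z)^2 * (v \<bullet> fst z)^2 \<partial>P)
      \<le> (2 * \<sigma>^2 + 2 * \<psi> * (w \<bullet> (S *v w))) * qform S v"
    by (simp add: algebra_simps)
qed

text \<open>Diagonalising \<open>K\<close> reduces the claim to the rank-one bound.\<close>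
lemma in_class_response_moment_bound:
  fixes S K :: "real^'d^'d"
  assumes C: "in_class \<sigma> \<psi> M S T P Q w" and K: "psd_mat K"
  shows "(\<integral>z. (snd z)^2 * qform K (fst z) \<partial>P)
           \<le> (2 * \<sigma>^2 + 2 * \<psi> * (w \<bullet> (S *v w))) * trace (S ** K)"
proof -
  have sym: "transpose K = K" using K by (simp add: psd_mat_def)
  obtain B where E: "orthonormal_eigenvectors K B" and X: "\<forall>x. x = (\<Sum>v\<in>B. (v \<bullet> x) *\<^sub>R v)"
    using orthonormal_eigenbasis_exists[OF sym] by blast
  define lam where "lam v = v \<bullet> (K *v v)" for v
  have lam0: "lam v \<ge> 0" for v using K by (simp add: lam_def psd_mat_def)
  note int_response = in_class_response_rank_one_bound(1)[OF C]
  note bnd = in_class_response_rank_one_bound(2)[OF C]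
  have "qform K x = (\<Sum>v\<in>B. lam v * (v \<bullet> x)^2)" for x
    unfolding qform_def lam_def by (rule quadratic_form_eigen_expansion[OF sym E X])
  hence "(snd z)^2 * qform K (fst z) = (\<Sum>v\<in>B. lam v * ((snd z)^2 * (v \<bullet> fst z)^2))" for z
    by (simp add: sum_distrib_left mult_ac)
  hence "(\<integral>z. (snd z)^2 * qform K (fst z) \<partial>P) = (\<Sum>v\<in>B. lam v * (\<integral>z. (snd z)^2 * (v \<bullet> fst z)^2 \<partial>P))"
    using int_response by (simp add: Bochner_Integration.integral_sum)
  also have "\<dots> \<le> (\<Sum>v\<in>B. lam v * ((2 * \<sigma>^2 + 2 * \<psi> * (w \<bullet> (S *v w))) * qform S v))"
    by (intro sum_mono mult_left_mono bnd lam0)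
  also have "\<dots> = (2 * \<sigma>^2 + 2 * \<psi> * (w \<bullet> (S *v w))) * trace (S ** K)"
    unfolding trace_mult_eigen_expansion[OF sym E X] lam_def[symmetric]
    by (simp add: sum_distrib_left sum_distrib_right mult_ac)
  finally show ?thesis .
qed

section \<open>The risk bound\<close>

lemma in_class_mean_response:
  fixes C :: "real^'d^'d"
  assumes Cl: "in_class \<sigma> \<psi> M S T P Q w"
  shows "(\<chi> a. \<integral>z. (snd z *\<^sub>R (C *v fst z)) $ a \<partial>P) = C *v (S *v w)"
proof -
  have "(\<integral>z. (snd z *\<^sub>R (C *v fst z)) $ a \<partial>P) = (\<Sum>k\<in>UNIV. C $ a $ k * (\<integral>z. snd z * fst z $ k \<partial>P))"
    for a
  proof -
    have "(\<lambda>z. (snd z *\<^sub>R (C *v fst z)) $ a) = (\<lambda>z. \<Sum>k\<in>UNIV. C $ a $ k * (snd z * fst z $ k))"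
      by (rule ext) (simp add: matrix_vector_mult_def sum_distrib_left mult_ac)
    moreover have "integrable P (\<lambda>z. snd z * fst z $ k)" for k
      by (rule in_class_integrable[OF Cl poly_bounded_mult[OF poly_bounded_snd poly_bounded_fst_nth]])
        (simp, intro continuous_intros)
    ultimately show ?thesis by (simp add: Bochner_Integration.integral_sum)
  qed
  thus ?thesis by (simp add: vec_eq_iff in_class_cross_moment[OF Cl] matrix_vector_mult_def)
qed

lemma in_class_sample_mean_error_le:
  fixes C :: "real^'d^'d"
  assumes Cl: "in_class \<sigma> \<psi> M S T P Q w" and n: "n \<ge> 1" and pT: "psd_mat T"
  defines "err \<omega> \<equiv> (1 / real n) *\<^sub>R (\<Sum>i<n. snd (\<omega> i) *\<^sub>R (C *v fst (\<omega> i))) - w"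
  shows "integrable (PiM {..<n} (\<lambda>_. P)) (\<lambda>\<omega>. qform T (err \<omega>))"
    and "(\<integral>\<omega>. qform T (err \<omega>) \<partial>PiM {..<n} (\<lambda>_. P))
         \<le> qform T (C *v (S *v w) - w)
           + (2 * \<sigma>^2 + 2 * \<psi> * (w \<bullet> (S *v w))) / real n * trace (S ** (transpose C ** T ** C))"
proof -
  define H where "H z = snd z *\<^sub>R (C *v fst z)" for z :: "(real^'d) \<times> real"
  define K where "K = transpose C ** T ** C"
  have sT: "transpose T = T" using pT by (simp add: psd_mat_def)
  have H: "H z $ a = snd z * (fst z \<bullet> C $ a)" for z a
    by (simp add: H_def matrix_vector_mul_component inner_commute)
  have iH: "integrable P (\<lambda>z. H z $ a)" for a
    unfolding H
    by (rule in_class_integrable[OF Cl poly_bounded_mult[OF poly_bounded_snd poly_bounded_fst_inner]])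
      (simp, intro continuous_intros)
  have iHH: "integrable P (\<lambda>z. H z $ a * H z $ b)" for a b
    unfolding H
    by (rule in_class_integrable[OF Cl poly_bounded_mult[OF
          poly_bounded_mult[OF poly_bounded_snd poly_bounded_fst_inner]
          poly_bounded_mult[OF poly_bounded_snd poly_bounded_fst_inner]]])
      (simp, intro continuous_intros)
  have mean: "(\<chi> a. \<integral>z. H z $ a \<partial>P) = C *v (S *v w)"
    unfolding H_def by (rule in_class_mean_response[OF Cl])
  have err: "err \<omega> = (1 / real n) *\<^sub>R (\<Sum>i<n. H (\<omega> i)) - w" for \<omega>
    by (simp add: err_def H_def)
  note E = integral_qform_sample_mean_error[OF in_class_prob_space(1)[OF Cl] n iH iHH, of T w]
  show "integrable (PiM {..<n} (\<lambda>_. P)) (\<lambda>\<omega>. qform T (err \<omega>))"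
    unfolding err by (rule E(1))
  have var: "(\<integral>z. qform T (H z) \<partial>P) \<le> (2 * \<sigma>^2 + 2 * \<psi> * (w \<bullet> (S *v w))) * trace (S ** K)"
  proof -
    have "qform T (H z) = (snd z)^2 * qform K (fst z)" for z
      by (simp add: H_def K_def qform_scaleR qform_matrix_vector[OF sT])
    moreover have "psd_mat K" unfolding K_def by (rule psd_congruence[OF pT])
    ultimately show ?thesis using in_class_response_moment_bound[OF Cl] by simp
  qed
  have "(\<integral>\<omega>. qform T (err \<omega>) \<partial>PiM {..<n} (\<lambda>_. P))
      = qform T (C *v (S *v w) - w) + (1 / real n) * ((\<integral>z. qform T (H z) \<partial>P) - qform T (C *v (S *v w)))"
    unfolding err E(2) mean ..
  also have "\<dots> \<le> qform T (C *v (S *v w) - w)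
      + (1 / real n) * ((2 * \<sigma>^2 + 2 * \<psi> * (w \<bullet> (S *v w))) * trace (S ** K))"
    using var qform_nonneg[OF pT, of "C *v (S *v w)"] by (intro add_left_mono mult_left_mono) auto
  finally show "(\<integral>\<omega>. qform T (err \<omega>) \<partial>PiM {..<n} (\<lambda>_. P))
      \<le> qform T (C *v (S *v w) - w)
        + (2 * \<sigma>^2 + 2 * \<psi> * (w \<bullet> (S *v w))) / real n * trace (S ** (transpose C ** T ** C))"
    by (simp add: K_def)
qed

text \<open>Since \<open>M\<^sup>1\<^sup>/\<^sup>2 w\<^sup>*\<close> lies in the unit ball, the bias and \<open>w\<^sup>*\<^sup>T S w\<^sup>*\<close> are bounded by
  spectral norms of the whitened matrices.\<close>
lemma in_class_expected_error_le_Jfun: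
  fixes M S T A :: "real^'d^'d"
  assumes n: "n \<ge> 1" and psi: "\<psi> \<ge> 0"
    and pM: "pd_mat M" and pS: "pd_mat S" and pT: "psd_mat T"
    and C: "in_class \<sigma> \<psi> M S T P Q w"
  shows "(\<integral>\<^sup>+\<omega>. ennreal (qform T (west n M S A \<omega> - w)) \<partial>(PiM {..<n} (\<lambda>_. P)))
              \<le> ennreal (Jfun n \<sigma> \<psi> M S T A)"
proof -
  define R where "R = msqrt M"
  define Mi where "Mi = matrix_inv R"
  define Si where "Si = matrix_inv S"
  interpret W: whitening R Mi S Si T
    unfolding R_def Mi_def Si_def by (rule whitening_msqrt[OF pM pS pT])
  define S' where "S' = Mi ** S ** Mi"
  define T' where "T' = Mi ** T ** Mi"
  define IA where "IA = mat 1 - A"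
  define Cm where "Cm = Mi ** A ** R ** Si"
  have "(R *v w) \<bullet> (R *v w) = w \<bullet> ((R ** R) *v w)" by (rule W.inner_R_self)
  also have "\<dots> = w \<bullet> (M *v w)" unfolding R_def msqrt_psd(2)[OF pd_imp_psd[OF pM]] ..
  also have "\<dots> \<le> 1" using C by (simp add: in_class_def ballW_def)
  finally have Rw: "norm (R *v w) \<le> 1" by (simp add: norm_eq_sqrt_inner)
  have tr: "trace (S ** (transpose Cm ** T ** Cm)) = frob_inner T' (A ** matrix_inv S' ** transpose A)"
    unfolding frob_inner_def S'_def T'_def Cm_def W.matrix_inv_whitened_S W.symmetric_whitened_T
    by (rule W.trace_whitened)
  have tr0: "trace (S ** (transpose Cm ** T ** Cm)) \<ge> 0"
    by (rule trace_mult_psd_nonneg[OF pd_imp_psd[OF pS] psd_congruence[OF pT]])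
  have west: "west n M S A \<omega> = (1 / real n) *\<^sub>R (\<Sum>i<n. snd (\<omega> i) *\<^sub>R (Cm *v fst (\<omega> i)))" for \<omega>
    by (simp add: west_def Cm_def R_def Mi_def Si_def matrix_vector_mult_sum matrix_vector_mult_scaleR)
  note E = in_class_sample_mean_error_le[OF C n pT, of Cm]
  have "(\<integral>\<omega>. qform T (west n M S A \<omega> - w) \<partial>PiM {..<n} (\<lambda>_. P))
      \<le> qform T (Cm *v (S *v w) - w)
        + (2 * \<sigma>^2 + 2 * \<psi> * (w \<bullet> (S *v w))) / real n * trace (S ** (transpose Cm ** T ** Cm))"
    unfolding west by (rule E(2))
  also have "\<dots> \<le> Jfun n \<sigma> \<psi> M S T A"
    unfolding Jfun_def Let_def R_def[symmetric] Mi_def[symmetric] S'_def[symmetric] T'_def[symmetric]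
      IA_def[symmetric] tr[symmetric]
    using W.bias_le_spec_norm[OF Rw, of A, folded T'_def IA_def Cm_def]
      W.qform_S_le_spec_norm[OF Rw, folded S'_def] psi tr0
    by (intro add_mono mult_right_mono divide_right_mono mult_left_mono) auto
  finally have "(\<integral>\<omega>. qform T (west n M S A \<omega> - w) \<partial>PiM {..<n} (\<lambda>_. P)) \<le> Jfun n \<sigma> \<psi> M S T A" .
  moreover have "(\<integral>\<^sup>+\<omega>. ennreal (qform T (west n M S A \<omega> - w)) \<partial>PiM {..<n} (\<lambda>_. P))
      = ennreal (\<integral>\<omega>. qform T (west n M S A \<omega> - w) \<partial>PiM {..<n} (\<lambda>_. P))"
    using E(1) unfolding west[symmetric]
    by (intro nn_integral_eq_integral) (auto simp: qform_nonneg[OF pT])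
  ultimately show ?thesis by (simp add: ennreal_leI)
qed

theorem theorem2:
  fixes n :: nat and \<sigma> \<psi> :: real and M S T :: "real^'d^'d"
  assumes "n \<ge> 1" and "\<sigma> > 0" and "\<psi> \<ge> 1"
    and "pd_mat M" and "pd_mat S" and "psd_mat T"
  shows "(\<forall>A P Q wstar. in_class \<sigma> \<psi> M S T P Q wstar \<longrightarrow>
            (\<integral>\<^sup>+\<omega>. ennreal (qform T (west n M S A \<omega> - wstar)) \<partial>(PiM {..<n} (\<lambda>_. P)))
              \<le> ennreal (Jfun n \<sigma> \<psi> M S T A))
       \<and> (\<forall>Astar. (\<forall>A. Jfun n \<sigma> \<psi> M S T Astar \<le> Jfun n \<sigma> \<psi> M S T A) \<longrightarrow>
            (\<forall>P Q wstar. in_class \<sigma> \<psi> M S T P Q wstar \<longrightarrow>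
               (\<integral>\<^sup>+\<omega>. ennreal (qform T (west n M S Astar \<omega> - wstar)) \<partial>(PiM {..<n} (\<lambda>_. P)))
                 \<le> ennreal (Jfun n \<sigma> \<psi> M S T Astar)))"
  using in_class_expected_error_le_Jfun[OF assms(1) _ assms(4-6)] assms(3) by auto

end
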